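(* Let $\Sigma$ be a finite alphabet, let $G_X=(V_X,E_X,L_X)$ and $G_Y=(V_Y,E_Y,L_Y)$ be finite directed graphs with edge labelings $L_X:E_X\to\Sigma$, $L_Y:E_Y\to\Sigma$, neither having parallel edges with the same label, and let $X,Y\subseteq\Sigma^{\mathbb{Z}}$ be the constrained systems they present. Let $P_Y=(\pi_Y,Q_Y)$ be a stationary Markov chain on $G_Y$ whose induced hidden Markov measure $\mu$ on $Y$ is ergodic. Let $E_{X\times Y}=E_X\times E_Y$ and $V_{X\times Y}=V_X\times V_Y$, with $\sigma(e_x,e_y)=(\sigma(e_x),\sigma(e_y))$ and $\tau(e_x,e_y)=(\tau(e_x),\tau(e_y))$. Then $R_0(X,Y,\mu)\le\mathrm{MB}(G_X,G_Y,P_Y)$, where $\mathrm{MB}(G_X,G_Y,P_Y)$ is the optimal value of the linear program: minimize $\sum_{e=(e_x,e_y)\in E_{X\times Y},\ L_X(e_x)\ne L_Y(e_y)}P(e)$ over $P\in\mathbb{R}^{E_{X\times Y}}$ subject to (1) $P(e)\ge0$ for all $e\in E_{X\times Y}$; (2) $\sum_{e\in E_{X\times Y}}P(e)=1$; (3) $\sum_{e'\in E_{X\times Y},\ e'_y=e}P(e')=P_Y(e)$ for all $e\in E_Y$; (4) $\sum_{e\in E_{X\times Y},\ \sigma(e)=v}P(e)=\sum_{e\in E_{X\times Y},\ \tau(e)=v}P(e)$ for all $v\in V_{X\times Y}$; (5) for all $e=(e_x,e_y)\in E_{X\times Y}$: $\sum_{e'\in E_{X\times Y},\ e'_y=e_y,\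 \sigma(e'_x)=\sigma(e_x)}P(e')=Q_Y(e_y)\sum_{e'\in E_{X\times Y},\ \sigma(e'_y)=\sigma(e_y),\ \sigma(e'_x)=\sigma(e_x)}P(e')$.
   Context: For a labeled graph $G$, the constrained system it presents is the set of label sequences of bi-infinite directed paths in $G$. A stationary Markov chain on a finite directed graph $(W,F)$ is a probability measure $P$ on $F$ with $\pi(w):=\sum_{\sigma(e)=w}P(e)=\sum_{\tau(e)=w}P(e)$ and $\pi(w)>0$ for every vertex $w$; $Q(e)=P(e)/\pi(\sigma(e))$; we write $P=(\pi,Q)$. The hidden Markov measure induced on $Y$ by $P_Y$ is the shift-invariant measure with $\mu(\{\mathbf{y}:\mathbf{y}_0^{n-1}=\overline{y}\})=\sum P_Y(e_0)\prod_{i=1}^{n-1}Q_Y(e_i)$, the sum over paths $e_0\cdots e_{n-1}$ in $G_Y$ with label sequence $\overline{y}$. $\mathscr{B}_n(X)$ is the set of length-$n$ words appearing in elements of $X$; $d$ is Hamming distance, $B_r$ the Hamming ball. For $A,C\subseteq\Sigma^n$, a probability measure $\eta$ on $\Sigma^n$ and $\varepsilon>0$: $R_\varepsilon(C,A,\eta)=\min\{r\in\mathbb{Z}_{\ge0}:\eta(A\cap\bigcup_{\overline{x}\in C}B_r(\overline{x}))\ge1-\varepsilon\}$. With $\mu_n$ the marginal of $\mu$ on coordinates $0,\dots,n-1$: $R_\varepsilon(X,Y,\mu)=\liminf_n\frac1nR_\varepsilon(\mathscr{B}_n(X),\mathscr{B}_n(Y),\mu_n)$ and $R_0(X,Y,\mu)=\lim_{\varepsilon\to0}R_\varepsilon(X,Y,\mu)$.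 *)

theory Defs
  imports "HOL-Probability.Probability"
begin

record ('v,'e,'a) lgraph =
  verts :: "'v set"
  edges :: "'e set"
  src   :: "'e \<Rightarrow> 'v"
  tgt   :: "'e \<Rightarrow> 'v"
  lab   :: "'e \<Rightarrow> 'a"

definition wf_lgraph :: "('v,'e,'a) lgraph \<Rightarrow> bool" where
  "wf_lgraph G \<longleftrightarrow> finite (verts G) \<and> finite (edges G)
     \<and> (\<forall>e\<in>edges G. src G e \<in> verts G \<and> tgt G e \<in> verts G)
     \<and> (\<forall>e\<in>edges G. \<forall>e'\<in>edges G.
          src G e = src G e' \<and> tgt G e = tgt G e' \<and> lab G e = lab G e' \<longrightarrow> e = e')"

definition presented :: "('v,'e,'a) lgraph \<Rightarrow> (int \<Rightarrow> 'a) set" where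
  "presented G = {x. \<exists>p :: int \<Rightarrow> 'e. (\<forall>i. p i \<in> edges G)
       \<and> (\<forall>i. tgt G (p i) = src G (p (i + 1))) \<and> (\<forall>i. x i = lab G (p i))}"

definition Bn :: "(int \<Rightarrow> 'a) set \<Rightarrow> nat \<Rightarrow> 'a list set" where
  "Bn X n = {w. length w = n \<and> (\<exists>x\<in>X. \<exists>k::int. w = map (\<lambda>i. x (k + int i)) [0..<n])}"

definition mc_pi :: "('v,'e,'a) lgraph \<Rightarrow> ('e \<Rightarrow> real) \<Rightarrow> 'v \<Rightarrow> real" where
  "mc_pi G P w = (\<Sum>e\<in>{e\<in>edges G. src G e = w}. P e)"

definition mc_Q :: "('v,'e,'a) lgraph \<Rightarrow> ('e \<Rightarrow> real) \<Rightarrow> 'e \<Rightarrow> real" where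
  "mc_Q G P e = P e / mc_pi G P (src G e)"

definition stationary_mc :: "('v,'e,'a) lgraph \<Rightarrow> ('e \<Rightarrow> real) \<Rightarrow> bool" where
  "stationary_mc G P \<longleftrightarrow> (\<forall>e\<in>edges G. P e \<ge> 0) \<and> (\<Sum>e\<in>edges G. P e) = 1
     \<and> (\<forall>w\<in>verts G. (\<Sum>e\<in>{e\<in>edges G. src G e = w}. P e) = (\<Sum>e\<in>{e\<in>edges G. tgt G e = w}. P e)
                    \<and> mc_pi G P w > 0)"

definition gpaths :: "('v,'e,'a) lgraph \<Rightarrow> nat \<Rightarrow> 'e list set" where
  "gpaths G n = {es. length es = n \<and> set es \<subseteq> edges G
      \<and> (\<forall>i. Suc i < n \<longrightarrow> tgt G (es ! i) = src G (es ! Suc i))}"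

definition hmm_cyl :: "('v,'e,'a) lgraph \<Rightarrow> ('e \<Rightarrow> real) \<Rightarrow> 'a list \<Rightarrow> real" where
  "hmm_cyl G P w = (if w = [] then 1 else
     (\<Sum>es\<in>{es\<in>gpaths G (length w). map (lab G) es = w}.
        P (es ! 0) * (\<Prod>i\<in>{1..<length w}. mc_Q G P (es ! i))))"

definition word_at :: "(int \<Rightarrow> 'a) \<Rightarrow> nat \<Rightarrow> 'a list" where
  "word_at x n = map (\<lambda>i. x (int i)) [0..<n]"

definition shift :: "(int \<Rightarrow> 'a) \<Rightarrow> (int \<Rightarrow> 'a)" where
  "shift x = (\<lambda>i. x (i + 1))"

definition seq_space :: "(int \<Rightarrow> 'a) measure" where
  "seq_space = PiM UNIV (\<lambda>_::int. count_space (UNIV :: 'a set))"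

definition hidden_markov_measure ::
  "('v,'e,'a) lgraph \<Rightarrow> ('e \<Rightarrow> real) \<Rightarrow> (int \<Rightarrow> 'a) measure \<Rightarrow> bool" where
  "hidden_markov_measure G P \<mu> \<longleftrightarrow> prob_space \<mu> \<and> sets \<mu> = sets seq_space
     \<and> (\<forall>A\<in>sets \<mu>. measure \<mu> (shift -` A \<inter> space \<mu>) = measure \<mu> A)
     \<and> (\<forall>w. measure \<mu> {x\<in>space \<mu>. word_at x (length w) = w} = hmm_cyl G P w)"

definition ergodic :: "(int \<Rightarrow> 'a) measure \<Rightarrow> bool" where
  "ergodic \<mu> \<longleftrightarrow> (\<forall>A\<in>sets \<mu>. shift -` A \<inter> space \<mu> = A \<longrightarrow> measure \<mu> A = 0 \<or> measure \<mu> A = 1)"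

definition hamming :: "'a list \<Rightarrow> 'a list \<Rightarrow> nat" where
  "hamming u v = card {i. i < length u \<and> u ! i \<noteq> v ! i}"

definition hball :: "nat \<Rightarrow> 'a list \<Rightarrow> 'a list set" where
  "hball r x = {w. length w = length x \<and> hamming x w \<le> r}"

definition Reps :: "real \<Rightarrow> 'a list set \<Rightarrow> 'a list set \<Rightarrow> ('a list set \<Rightarrow> real) \<Rightarrow> nat" where
  "Reps \<epsilon> C A \<eta> = (LEAST r::nat. \<eta> (A \<inter> (\<Union>x\<in>C. hball r x)) \<ge> 1 - \<epsilon>)"

definition marginal :: "(int \<Rightarrow> 'a) measure \<Rightarrow> nat \<Rightarrow> 'a list set \<Rightarrow> real" where
  "marginal \<mu> n S = measure \<mu> {x\<in>space \<mu>. word_at x n \<in> S}"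

definition R_eps :: "(int \<Rightarrow> 'a) set \<Rightarrow> (int \<Rightarrow> 'a) set \<Rightarrow> (int \<Rightarrow> 'a) measure \<Rightarrow> real \<Rightarrow> ereal" where
  "R_eps X Y \<mu> \<epsilon> = liminf (\<lambda>n. ereal (real (Reps \<epsilon> (Bn X n) (Bn Y n) (marginal \<mu> n)) / real n))"

definition R0 :: "(int \<Rightarrow> 'a) set \<Rightarrow> (int \<Rightarrow> 'a) set \<Rightarrow> (int \<Rightarrow> 'a) measure \<Rightarrow> ereal" where
  "R0 X Y \<mu> = Lim (at_right (0::real)) (R_eps X Y \<mu>)"

definition MB_feasible ::
  "('v,'e,'a) lgraph \<Rightarrow> ('w,'f,'a) lgraph \<Rightarrow> ('f \<Rightarrow> real) \<Rightarrow> ('e \<times> 'f \<Rightarrow> real) \<Rightarrow> bool" where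
  "MB_feasible GX GY PY P \<longleftrightarrow>
     (let E = edges GX \<times> edges GY;
          \<sigma> = (\<lambda>e. (src GX (fst e), src GY (snd e)));
          \<tau> = (\<lambda>e. (tgt GX (fst e), tgt GY (snd e))) in
     (\<forall>e\<in>E. P e \<ge> 0)
     \<and> (\<Sum>e\<in>E. P e) = 1
     \<and> (\<forall>e\<in>edges GY. (\<Sum>e'\<in>{e'\<in>E. snd e' = e}. P e') = PY e)
     \<and> (\<forall>v\<in>verts GX \<times> verts GY. (\<Sum>e\<in>{e\<in>E. \<sigma> e = v}. P e) = (\<Sum>e\<in>{e\<in>E. \<tau> e = v}. P e))
     \<and> (\<forall>e\<in>E. (\<Sum>e'\<in>{e'\<in>E. snd e' = snd e \<and> src GX (fst e') = src GX (fst e)}. P e')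
              = mc_Q GY PY (snd e) *
                (\<Sum>e'\<in>{e'\<in>E. src GY (snd e') = src GY (snd e) \<and> src GX (fst e') = src GX (fst e)}. P e')))"

text \<open>Optimal value of the LP (+infinity if infeasible).\<close>
definition MB :: "('v,'e,'a) lgraph \<Rightarrow> ('w,'f,'a) lgraph \<Rightarrow> ('f \<Rightarrow> real) \<Rightarrow> ereal" where
  "MB GX GY PY = Inf {ereal (\<Sum>e\<in>{e\<in>edges GX \<times> edges GY. lab GX (fst e) \<noteq> lab GY (snd e)}. P e)
                      | P. MB_feasible GX GY PY P}"

end

theory Submission
  imports Defs
begin

(* On the edges of positive weight, P is the
   stationary law of a Markov chain on pairs (e_x, e_y); constraint (5) makes the second
   component the Markov chain of P_Y, and the first component always reads a word of X. Along a
   path the Hamming distance between the two label words is the number of mismatching steps,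
   whose mean per step is the objective value c of P. A fourth-moment martingale form of the
   ergodic theorem gives a starting pair from which, with probability close to 1, every prefix of
   length j has at most j (c + s) + A mismatches. Hence the set of sequences all of whose
   prefixes of length n lie within distance n (c + s) + A of words of X has positive measure;
   it is shift invariant, so by ergodicity it has full measure, and the rate is at most c + s. *)

section \<open>Cylinder sets and marginals\<close>

lemma space_seq_space: "space seq_space = UNIV"
  by (simp add: seq_space_def space_PiM PiE_UNIV)

lemma sets_seq_space_coord: "{x. x j = a} \<in> sets seq_space"
proof -
  have "{x \<in> space seq_space. x j = a} \<in> sets seq_space"
    unfolding seq_space_def by measurable
  then show ?thesis by (simp add: space_seq_space)
qed

lemma word_at_eq_iff: "word_at x n = w \<longleftrightarrow> length w = n \<and> (\<forall>i<n. x (int i) = w ! i)"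
  unfolding word_at_def by (auto simp: list_eq_iff_nth_eq)

lemma length_word_at [simp]: "length (word_at x n) = n"
  unfolding word_at_def by simp

lemma word_at_Suc: "word_at x (Suc n) = x 0 # word_at (shift x) n"
  unfolding word_at_def shift_def map_upt_Suc by (simp add: algebra_simps)

lemma take_word_at: "m \<le> n \<Longrightarrow> take m (word_at x n) = word_at x m"
  unfolding word_at_def by (simp add: take_map)

lemma sets_word_at_eq: "{x::int \<Rightarrow> 'a. word_at x n = w} \<in> sets seq_space"
proof -
  have "{x::int \<Rightarrow> 'a. \<forall>i<m. x (int i) = w ! i} \<in> sets seq_space" for m
  proof (induction m)
    case 0
    then show ?case using sets.top[of seq_space] by (simp add: space_seq_space)
  next
    case (Suc m)
    have "{x::int \<Rightarrow> 'a. \<forall>i<Suc m. x (int i) = w ! i} =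
          {x. \<forall>i<m. x (int i) = w ! i} \<inter> {x. x (int m) = w ! m}"
      using less_Suc_eq by auto
    then show ?case using sets.Int[OF Suc sets_seq_space_coord] by simp
  qed
  then show ?thesis by (cases "length w = n") (simp_all add: word_at_eq_iff)
qed

lemma finite_words_length: "finite {w::'a::finite list. length w = n \<and> P w}"
  by (rule finite_subset[OF _ finite_lists_length_eq[of "UNIV::'a set" n]]) auto

lemma sets_word_at_mem: "{x::int \<Rightarrow> 'a::finite. word_at x n \<in> W} \<in> sets seq_space"
proof -
  have "{x. word_at x n \<in> W} = (\<Union>w\<in>{w. length w = n \<and> w \<in> W}. {x. word_at x n = w})"
    by auto
  also have "\<dots> \<in> sets seq_space"
    using finite_words_length sets_word_at_eq by (intro sets.finite_UN) auto
  finally show ?thesis .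
qed

lemma hidden_markov_measureD:
  assumes "hidden_markov_measure G P \<mu>"
  shows "space \<mu> = UNIV" "sets \<mu> = sets seq_space" "prob_space \<mu>"
  using assms sets_eq_imp_space_eq space_seq_space unfolding hidden_markov_measure_def by metis+

lemma marginal_eq_sum_hmm_cyl:
  fixes \<mu> :: "(int \<Rightarrow> 'a::finite) measure"
  assumes hmm: "hidden_markov_measure G P \<mu>"
  shows "marginal \<mu> n W = (\<Sum>w | length w = n \<and> w \<in> W. hmm_cyl G P w)"
proof -
  note \<mu> = hidden_markov_measureD[OF hmm]
  interpret prob_space \<mu> by fact
  have "marginal \<mu> n W = measure \<mu> (\<Union>w\<in>{w. length w = n \<and> w \<in> W}. {x. word_at x n = w})"
    unfolding marginal_def \<mu>(1) by (auto intro: arg_cong[where f = "measure \<mu>"])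
  also have "\<dots> = (\<Sum>w | length w = n \<and> w \<in> W. measure \<mu> {x. word_at x n = w})"
    using finite_words_length \<mu> sets_word_at_eq
    by (intro finite_measure_finite_Union) (auto simp: disjoint_family_on_def)
  also have "\<dots> = (\<Sum>w | length w = n \<and> w \<in> W. hmm_cyl G P w)"
    using hmm unfolding hidden_markov_measure_def \<mu>(1) by (intro sum.cong) auto
  finally show ?thesis .
qed

section \<open>Words and Hamming distance\<close>

lemma length_Bn: "x \<in> Bn X n \<Longrightarrow> length x = n"
  unfolding Bn_def by auto

lemma Bn_tl: "x \<in> Bn X (Suc n) \<Longrightarrow> tl x \<in> Bn X n"
proof -
  assume "x \<in> Bn X (Suc n)"
  then obtain z k where z: "z \<in> X" "x = map (\<lambda>i. z (k + int i)) [0..<Suc n]"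
    unfolding Bn_def by auto
  then have "tl x = map (\<lambda>i. z ((k + 1) + int i)) [0..<n]"
    unfolding map_upt_Suc by (simp add: algebra_simps)
  then show ?thesis unfolding Bn_def using z(1) by auto
qed

lemma Bn_Cons_ex: "x \<in> Bn X n \<Longrightarrow> \<exists>a. a # x \<in> Bn X (Suc n)"
proof -
  assume "x \<in> Bn X n"
  then obtain z k where z: "z \<in> X" "x = map (\<lambda>i. z (k + int i)) [0..<n]"
    unfolding Bn_def by auto
  have "z (k - 1) # x = map (\<lambda>i. z ((k - 1) + int i)) [0..<Suc n]"
    unfolding z(2) map_upt_Suc by (simp add: algebra_simps)
  then have "z (k - 1) # x \<in> Bn X (Suc n)" unfolding Bn_def using z(1) by auto
  then show ?thesis by blast
qed

lemma Bn_presented_of_path: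
  assumes "\<forall>i. p i \<in> edges G" "\<forall>i. tgt G (p i) = src G (p (i + 1))"
  shows "map (\<lambda>i. lab G (p (int i))) [0..<n] \<in> Bn (presented G) n"
proof -
  have "(\<lambda>i. lab G (p i)) \<in> presented G" unfolding presented_def using assms by blast
  then show ?thesis unfolding Bn_def by (auto intro!: exI[of _ 0])
qed

lemma hamming_le_length: "hamming u v \<le> length u"
  unfolding hamming_def by (rule order_trans[OF card_mono[of "{..<length u}"]]) auto

lemma hamming_tl_le:
  assumes "length u = length v"
  shows "hamming (tl u) (tl v) \<le> hamming u v"
proof -
  have "Suc ` {i. i < length (tl u) \<and> tl u ! i \<noteq> tl v ! i} \<subseteq> {i. i < length u \<and> u ! i \<noteq> v ! i}"
    using assms by (cases u; cases v) auto
  then have "card (Suc ` {i. i < length (tl u) \<and> tl u ! i \<noteq> tl v ! i})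
      \<le> card {i. i < length u \<and> u ! i \<noteq> v ! i}"
    by (rule card_mono[rotated]) auto
  then show ?thesis unfolding hamming_def by (simp add: card_image)
qed

lemma hamming_Cons_le:
  assumes "length u = length v"
  shows "hamming (a # u) (b # v) \<le> hamming u v + 1"
proof -
  have "{i. i < length (a # u) \<and> (a # u) ! i \<noteq> (b # v) ! i}
        \<subseteq> insert 0 (Suc ` {i. i < length u \<and> u ! i \<noteq> v ! i})"
  proof
    fix x assume "x \<in> {i. i < length (a # u) \<and> (a # u) ! i \<noteq> (b # v) ! i}"
    then show "x \<in> insert 0 (Suc ` {i. i < length u \<and> u ! i \<noteq> v ! i})" by (cases x) auto
  qed
  then have "hamming (a # u) (b # v) \<le> card (insert 0 (Suc ` {i. i < length u \<and> u ! i \<noteq> v ! i}))"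
    unfolding hamming_def by (rule card_mono[rotated]) auto
  also have "\<dots> \<le> hamming u v + 1"
    unfolding hamming_def by (simp add: card_insert_if card_image)
  finally show ?thesis .
qed

section \<open>Bi-infinite extension of finite paths\<close>

primrec greedy_walk :: "'e set \<Rightarrow> ('e \<Rightarrow> 'v) \<Rightarrow> ('e \<Rightarrow> 'v) \<Rightarrow> 'e \<Rightarrow> nat \<Rightarrow> 'e" where
  "greedy_walk D s t e 0 = e"
| "greedy_walk D s t e (Suc k) = (SOME e'. e' \<in> D \<and> s e' = t (greedy_walk D s t e k))"

lemma greedy_walk:
  assumes succ: "\<And>e. e \<in> D \<Longrightarrow> \<exists>e'\<in>D. s e' = t e" and e: "e \<in> D"
  shows "greedy_walk D s t e k \<in> D \<and> s (greedy_walk D s t e (Suc k)) = t (greedy_walk D s t e k)"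
proof (induction k)
  case 0
  then show ?case using someI_ex[OF succ[OF e, unfolded Bex_def]] e by simp
next
  case (Suc k)
  then show ?case using someI_ex[OF succ[unfolded Bex_def]] by simp
qed

lemma finite_path_extends_forward:
  fixes es :: "'e list"
  assumes succ: "\<And>e. e \<in> D \<Longrightarrow> \<exists>e'\<in>D. s e' = t e"
    and ne: "es \<noteq> []" and sub: "set es \<subseteq> D"
    and chain: "\<And>i. Suc i < length es \<Longrightarrow> t (es ! i) = s (es ! Suc i)"
  shows "\<exists>f::nat \<Rightarrow> 'e. (\<forall>k. f k \<in> D) \<and> (\<forall>k. t (f k) = s (f (Suc k))) \<and> (\<forall>k<length es. f k = es ! k)"
proof -
  define n where "n = length es"
  have n: "n > 0" "es ! (n - 1) = last es" using ne unfolding n_def by (simp_all add: last_conv_nth)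
  define F where "F = greedy_walk D s t (last es)"
  have F: "F k \<in> D \<and> s (F (Suc k)) = t (F k)" for k
    unfolding F_def using ne sub by (intro greedy_walk[OF succ]) auto
  define f where "f k = (if k < n then es ! k else F (k - (n - 1)))" for k
  have "\<forall>k. f k \<in> D" unfolding f_def using F sub n_def by auto
  moreover have "t (f k) = s (f (Suc k))" for k
  proof -
    consider "Suc k < n" | "Suc k = n" | "n \<le> k" by linarith
    then show ?thesis
    proof cases
      case 1
      then show ?thesis using chain n_def unfolding f_def by auto
    next
      case 2
      then show ?thesis using F[of 0] n unfolding f_def F_def by auto
    next
      case 3
      then have "Suc k - (n - 1) = Suc (k - (n - 1))" using n by linarith
      then show ?thesis using 3 F unfolding f_def by auto
    qed
  qed
  moreover have "\<forall>k<length es. f k = es ! k" unfolding f_def n_def by auto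
  ultimately show ?thesis by blast
qed

text \<open>Extend forward from the path and backward from its first edge, and glue at index \<open>0\<close>.\<close>

lemma finite_path_extends_biinfinite:
  fixes es :: "'e list"
  assumes succ: "\<And>e. e \<in> D \<Longrightarrow> \<exists>e'\<in>D. s e' = t e"
    and pred: "\<And>e. e \<in> D \<Longrightarrow> \<exists>e'\<in>D. t e' = s e"
    and ne: "es \<noteq> []" and sub: "set es \<subseteq> D"
    and chain: "\<And>i. Suc i < length es \<Longrightarrow> t (es ! i) = s (es ! Suc i)"
  shows "\<exists>p::int \<Rightarrow> 'e. (\<forall>i. p i \<in> D) \<and> (\<forall>i. t (p i) = s (p (i + 1)))
           \<and> (\<forall>i<length es. p (int i) = es ! i)"
proof -
  obtain f where f: "\<forall>k. f k \<in> D" "\<forall>k. t (f k) = s (f (Suc k))" "\<forall>k<length es. f k = es ! k"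
    using finite_path_extends_forward[OF succ ne sub chain] by blast
  obtain b where b: "\<forall>k. b k \<in> D" "\<forall>k. s (b k) = t (b (Suc k))" "b 0 = es ! 0"
  proof -
    have "es ! 0 \<in> D" using ne sub nth_mem[of 0 es] by auto
    then show ?thesis
      using finite_path_extends_forward[where s = t and t = s, OF pred, of "[es ! 0]"] that by auto
  qed
  define p where "p i = (if 0 \<le> i then f (nat i) else b (nat (- i)))" for i
  have "t (p i) = s (p (i + 1))" for i
  proof -
    consider "0 \<le> i" | "i = -1" | "i < -1" by linarith
    then show ?thesis
    proof cases
      case 1
      then have "nat (i + 1) = Suc (nat i)" by linarith
      then show ?thesis using 1 f(2) unfolding p_def by simp
    next
      case 2
      then show ?thesis using b(2)[rule_format, of 0] b(3) f(3) ne unfolding p_def by simp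
    next
      case 3
      then have "nat (- i) = Suc (nat (- (i + 1)))" by linarith
      then show ?thesis using 3 b(2) unfolding p_def by simp
    qed
  qed
  moreover have "\<forall>i. p i \<in> D" unfolding p_def using f(1) b(1) by simp
  moreover have "\<forall>i<length es. p (int i) = es ! i" unfolding p_def using f(3) by simp
  ultimately show ?thesis by blast
qed

lemma positive_circulation_succ:
  fixes P :: "'e \<Rightarrow> real"
  assumes fin: "finite E" and st: "\<And>e. e \<in> E \<Longrightarrow> s e \<in> V \<and> t e \<in> V"
    and nn: "\<And>e. e \<in> E \<Longrightarrow> P e \<ge> 0"
    and circ: "\<And>v. v \<in> V \<Longrightarrow> (\<Sum>e | e \<in> E \<and> s e = v. P e) = (\<Sum>e | e \<in> E \<and> t e = v. P e)"
    and e: "e \<in> E" "P e > 0"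
  shows "\<exists>e'\<in>{e\<in>E. P e > 0}. s e' = t e"
proof (rule ccontr)
  assume "\<not> ?thesis"
  then have "(\<Sum>e' | e' \<in> E \<and> s e' = t e. P e') \<le> 0"
    by (intro sum_nonpos) (auto simp: not_less)
  moreover have "P e \<le> (\<Sum>e' | e' \<in> E \<and> t e' = t e. P e')"
    using fin e nn by (intro member_le_sum) auto
  ultimately show False using circ[of "t e"] st[OF e(1)] e(2) by linarith
qed

lemma positive_circulation_pred:
  fixes P :: "'e \<Rightarrow> real"
  assumes "finite E" and "\<And>e. e \<in> E \<Longrightarrow> s e \<in> V \<and> t e \<in> V"
    and "\<And>e. e \<in> E \<Longrightarrow> P e \<ge> 0"
    and "\<And>v. v \<in> V \<Longrightarrow> (\<Sum>e | e \<in> E \<and> s e = v. P e) = (\<Sum>e | e \<in> E \<and> t e = v. P e)"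
    and "e \<in> E" "P e > 0"
  shows "\<exists>e'\<in>{e\<in>E. P e > 0}. t e' = s e"
  by (rule positive_circulation_succ[of E t V s P]) (use assms in auto)

lemma Bn_presented_of_finite_path:
  assumes D: "D \<subseteq> edges G"
    and succ: "\<And>e. e \<in> D \<Longrightarrow> \<exists>e'\<in>D. src G e' = tgt G e"
    and pred: "\<And>e. e \<in> D \<Longrightarrow> \<exists>e'\<in>D. tgt G e' = src G e"
    and ne: "es \<noteq> []" and sub: "set es \<subseteq> D"
    and chain: "\<And>i. Suc i < length es \<Longrightarrow> tgt G (es ! i) = src G (es ! Suc i)"
  shows "map (lab G) es \<in> Bn (presented G) (length es)"
proof -
  obtain q where q: "\<forall>i. q i \<in> D" "\<forall>i. tgt G (q i) = src G (q (i + 1))"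
      "\<forall>i<length es. q (int i) = es ! i"
    using finite_path_extends_biinfinite[OF succ pred ne sub chain] by blast
  have "map (\<lambda>i. lab G (q (int i))) [0..<length es] \<in> Bn (presented G) (length es)"
    using q(1,2) D by (intro Bn_presented_of_path) auto
  moreover have "map (\<lambda>i. lab G (q (int i))) [0..<length es] = map (lab G) es"
    using q(3) by (intro nth_equalityI) simp_all
  ultimately show ?thesis by simp
qed

section \<open>Rates\<close>

lemma Reps_le: "\<eta> (A \<inter> (\<Union>x\<in>C. hball r x)) \<ge> 1 - \<epsilon> \<Longrightarrow> Reps \<epsilon> C A \<eta> \<le> r"
  unfolding Reps_def by (rule Least_le)

lemma Reps_antimono:
  assumes "\<eta> (A \<inter> (\<Union>x\<in>C. hball r x)) \<ge> 1 - \<epsilon>" and "\<epsilon> \<le> \<epsilon>'"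
  shows "Reps \<epsilon>' C A \<eta> \<le> Reps \<epsilon> C A \<eta>"
proof -
  have "\<eta> (A \<inter> (\<Union>x\<in>C. hball (Reps \<epsilon> C A \<eta>) x)) \<ge> 1 - \<epsilon>"
    unfolding Reps_def using assms(1) by (rule LeastI)
  then show ?thesis using assms(2) by (intro Reps_le) simp
qed

lemma R_eps_antimono:
  assumes "\<And>n. n > 0 \<Longrightarrow> Reps \<epsilon>' (Bn X n) (Bn Y n) (marginal \<mu> n) \<le> Reps \<epsilon> (Bn X n) (Bn Y n) (marginal \<mu> n)"
  shows "R_eps X Y \<mu> \<epsilon>' \<le> R_eps X Y \<mu> \<epsilon>"
  unfolding R_eps_def
proof (rule Liminf_mono)
  show "\<forall>\<^sub>F n in sequentially. ereal (real (Reps \<epsilon>' (Bn X n) (Bn Y n) (marginal \<mu> n)) / real n)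
          \<le> ereal (real (Reps \<epsilon> (Bn X n) (Bn Y n) (marginal \<mu> n)) / real n)"
    using eventually_gt_at_top[of "0::nat"]
    by eventually_elim (use assms in \<open>auto intro!: divide_right_mono\<close>)
qed

text \<open>Monotonicity makes \<open>R_eps\<close> converge as \<open>\<epsilon> \<rightarrow> 0+\<close>, so that \<open>R0\<close>, defined through \<open>Lim\<close>,
  is its supremum.\<close>

lemma R0_le:
  assumes antimono: "\<And>\<epsilon> \<epsilon>'. 0 < \<epsilon> \<Longrightarrow> \<epsilon> \<le> \<epsilon>' \<Longrightarrow> R_eps X Y \<mu> \<epsilon>' \<le> R_eps X Y \<mu> \<epsilon>"
    and bound: "\<And>\<epsilon>. 0 < \<epsilon> \<Longrightarrow> R_eps X Y \<mu> \<epsilon> \<le> c"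
  shows "R0 X Y \<mu> \<le> c"
proof -
  define L where "L = (SUP \<epsilon>\<in>{0<..}. R_eps X Y \<mu> \<epsilon>)"
  have "(R_eps X Y \<mu> \<longlongrightarrow> L) (at_right (0::real))"
  proof (rule order_tendstoI)
    fix a assume "a < L"
    then obtain \<epsilon> where "\<epsilon> > 0" "a < R_eps X Y \<mu> \<epsilon>" unfolding L_def less_SUP_iff by auto
    then show "\<forall>\<^sub>F x in at_right 0. a < R_eps X Y \<mu> x"
      unfolding eventually_at_right_field using antimono
      by (intro exI[of _ \<epsilon>]) (auto intro: less_le_trans)
  next
    fix b assume "L < b"
    have "R_eps X Y \<mu> x < b" if "x > 0" for x
    proof -
      have "R_eps X Y \<mu> x \<le> L" unfolding L_def using that by (intro SUP_upper) auto
      then show ?thesis using \<open>L < b\<close> by simp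
    qed
    then show "\<forall>\<^sub>F x in at_right 0. R_eps X Y \<mu> x < b"
      unfolding eventually_at_right_field by (intro exI[of _ 1]) auto
  qed
  then have "R0 X Y \<mu> = L" unfolding R0_def by (intro tendsto_Lim) simp
  also have "L \<le> c" unfolding L_def using bound by (intro SUP_least) auto
  finally show ?thesis .
qed

section \<open>Finite Markov kernels\<close>

lemma convergent_subseq_finite:
  fixes X :: "nat \<Rightarrow> 'x \<Rightarrow> real"
  assumes "finite S" and "\<And>x n. x \<in> S \<Longrightarrow> \<bar>X n x\<bar> \<le> B"
  shows "\<exists>r. strict_mono r \<and> (\<forall>x\<in>S. convergent (\<lambda>n. X (r n) x))"
  using assms
proof (induction S rule: finite_induct)
  case empty
  then show ?case by (intro exI[of _ id]) (auto simp: strict_mono_def)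
next
  case (insert x S)
  then obtain r where r: "strict_mono r" "\<forall>y\<in>S. convergent (\<lambda>n. X (r n) y)" by auto
  obtain r' where r': "strict_mono r'" "monoseq (\<lambda>n. X (r (r' n)) x)"
    using seq_monosub[of "\<lambda>n. X (r n) x"] by auto
  have "Bseq (\<lambda>n. X (r (r' n)) x)" using insert.prems[of x] by (intro BseqI'[of _ B]) auto
  then have "convergent (\<lambda>n. X (r (r' n)) x)" using r'(2) by (rule Bseq_monoseq_convergent)
  moreover have "convergent (\<lambda>n. X (r (r' n)) y)" if "y \<in> S" for y
    using convergent_subseq_convergent[OF r(2)[rule_format, OF that] r'(1)] by (simp add: comp_def)
  moreover have "strict_mono (\<lambda>n. r (r' n))" using strict_mono_o[OF r(1) r'(1)] by (simp add: comp_def)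
  ultimately show ?case by (intro exI[of _ "\<lambda>n. r (r' n)"]) auto
qed

locale markov_kernel =
  fixes S :: "'s set" and K :: "'s \<Rightarrow> 's \<Rightarrow> real"
  assumes finite_S: "finite S"
    and K_nonneg: "\<And>x y. x \<in> S \<Longrightarrow> y \<in> S \<Longrightarrow> 0 \<le> K x y"
    and K_sum: "\<And>x. x \<in> S \<Longrightarrow> (\<Sum>y\<in>S. K x y) = 1"
begin

definition trans_op :: "('s \<Rightarrow> real) \<Rightarrow> 's \<Rightarrow> real" where
  "trans_op u x = (\<Sum>y\<in>S. K x y * u y)"

lemma trans_op_cong: "(\<And>y. y \<in> S \<Longrightarrow> u y = v y) \<Longrightarrow> trans_op u x = trans_op v x"
  unfolding trans_op_def by (intro sum.cong) auto

lemma trans_op_diff: "trans_op (\<lambda>y. u y - v y) x = trans_op u x - trans_op v x"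
  unfolding trans_op_def by (simp add: right_diff_distrib sum_subtractf)

lemma trans_op_divide: "trans_op (\<lambda>y. u y / c) x = trans_op u x / c"
  unfolding trans_op_def by (simp add: sum_divide_distrib)

lemma trans_op_sum: "trans_op (\<lambda>y. \<Sum>j\<in>J. u j y) x = (\<Sum>j\<in>J. trans_op (u j) x)"
  unfolding trans_op_def by (simp add: sum_distrib_left sum.swap[of _ J])

lemma trans_op_const: "x \<in> S \<Longrightarrow> trans_op (\<lambda>_. c) x = c"
  unfolding trans_op_def by (simp add: K_sum flip: sum_distrib_right)

lemma trans_op_mono: "x \<in> S \<Longrightarrow> (\<And>y. y \<in> S \<Longrightarrow> u y \<le> v y) \<Longrightarrow> trans_op u x \<le> trans_op v x"
  unfolding trans_op_def by (intro sum_mono mult_left_mono K_nonneg) auto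

lemma trans_op_abs_le:
  assumes "x \<in> S" and "\<And>y. y \<in> S \<Longrightarrow> \<bar>u y\<bar> \<le> H"
  shows "\<bar>trans_op u x\<bar> \<le> H"
proof -
  have "- H \<le> u y" "u y \<le> H" if "y \<in> S" for y
    using assms(2)[OF that] by (auto simp: abs_le_iff)
  then have "trans_op (\<lambda>_. - H) x \<le> trans_op u x" "trans_op u x \<le> trans_op (\<lambda>_. H) x"
    using assms(1) by (auto intro!: trans_op_mono)
  then show ?thesis using trans_op_const[OF assms(1)] by (simp add: abs_le_iff)
qed

lemma funpow_trans_op_abs_le:
  "x \<in> S \<Longrightarrow> (\<And>y. y \<in> S \<Longrightarrow> \<bar>u y\<bar> \<le> H) \<Longrightarrow> \<bar>(trans_op ^^ j) u x\<bar> \<le> H"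
  by (induction j arbitrary: x) (auto intro: trans_op_abs_le)

lemma funpow_trans_op_diff:
  "(trans_op ^^ j) (\<lambda>y. u y - v y) = (\<lambda>y. (trans_op ^^ j) u y - (trans_op ^^ j) v y)"
  by (induction j) (auto simp: trans_op_diff)

lemma funpow_trans_op_fixed:
  assumes "\<And>y. y \<in> S \<Longrightarrow> trans_op u y = u y"
  shows "x \<in> S \<Longrightarrow> (trans_op ^^ j) u x = u x"
proof (induction j arbitrary: x)
  case (Suc j)
  then have "trans_op ((trans_op ^^ j) u) x = trans_op u x" by (intro trans_op_cong) auto
  then show ?case using Suc assms by simp
qed simp

definition cesaro :: "nat \<Rightarrow> ('s \<Rightarrow> real) \<Rightarrow> 's \<Rightarrow> real" where
  "cesaro n u x = (\<Sum>j<n. (trans_op ^^ j) u x) / real n"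

lemma cesaro_abs_le:
  assumes x: "x \<in> S" and uH: "\<And>y. y \<in> S \<Longrightarrow> \<bar>u y\<bar> \<le> H"
  shows "\<bar>cesaro n u x\<bar> \<le> H"
proof -
  have "\<bar>\<Sum>j<n. (trans_op ^^ j) u x\<bar> \<le> (\<Sum>j<n. H)"
    using funpow_trans_op_abs_le[where u = u, OF x uH] by (intro order_trans[OF sum_abs sum_mono])
  moreover have "H \<ge> 0" using uH[OF x] by linarith
  ultimately show ?thesis unfolding cesaro_def by (cases "n = 0") (auto simp: divide_le_eq mult.commute)
qed

lemma trans_op_cesaro: "trans_op (cesaro n u) x - cesaro n u x = ((trans_op ^^ n) u x - u x) / real n"
proof -
  have "trans_op (cesaro n u) x = (\<Sum>j<n. (trans_op ^^ Suc j) u x) / real n"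
    unfolding cesaro_def trans_op_divide trans_op_sum by simp
  then have "trans_op (cesaro n u) x - cesaro n u x
      = (\<Sum>j<n. (trans_op ^^ Suc j) u x - (trans_op ^^ j) u x) / real n"
    unfolding cesaro_def by (simp add: sum_subtractf diff_divide_distrib)
  also have "\<dots> = ((trans_op ^^ n) u x - u x) / real n"
    by (subst sum_lessThan_telescope) simp
  finally show ?thesis .
qed

text \<open>The Cesaro averages are bounded on the finite set \<open>S\<close>, so a subsequence converges; the limit
  is harmonic because \<open>trans_op\<close> moves the \<open>n\<close>-th average by \<open>O(1/n)\<close>.\<close>

lemma harmonic_cesaro_limit:
  obtains r Z where "strict_mono r" "\<And>x. x \<in> S \<Longrightarrow> (\<lambda>k. cesaro (r k) u x) \<longlonglongrightarrow> Z x"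
    "\<And>x. x \<in> S \<Longrightarrow> trans_op Z x = Z x"
proof -
  define H where "H = (\<Sum>y\<in>S. \<bar>u y\<bar>)"
  have uH: "\<bar>u y\<bar> \<le> H" if "y \<in> S" for y
    unfolding H_def using finite_S that by (intro member_le_sum) auto
  obtain r where r: "strict_mono r" "\<forall>x\<in>S. convergent (\<lambda>k. cesaro (r k) u x)"
    using convergent_subseq_finite[OF finite_S, of "\<lambda>k. cesaro k u" H] cesaro_abs_le uH by blast
  define Z where "Z x = lim (\<lambda>k. cesaro (r k) u x)" for x
  have lim: "(\<lambda>k. cesaro (r k) u x) \<longlonglongrightarrow> Z x" if "x \<in> S" for x
    using r(2) that unfolding Z_def by (simp add: convergent_LIMSEQ_iff)
  have "trans_op Z x = Z x" if x: "x \<in> S" for x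
  proof -
    have "(\<lambda>k. trans_op (cesaro (r k) u) x - cesaro (r k) u x) \<longlonglongrightarrow> trans_op Z x - Z x"
      unfolding trans_op_def by (intro tendsto_intros lim x) auto
    moreover have "(\<lambda>k. trans_op (cesaro (r k) u) x - cesaro (r k) u x) \<longlonglongrightarrow> 0"
    proof (rule Lim_null_comparison)
      have "\<bar>(trans_op ^^ n) u x - u x\<bar> \<le> 2 * H" for n
        using funpow_trans_op_abs_le[where u = u and j = n, OF x uH] uH[OF x] by linarith
      then show "\<forall>\<^sub>F k in sequentially.
          norm (trans_op (cesaro (r k) u) x - cesaro (r k) u x) \<le> 2 * H / real (r k)"
        unfolding trans_op_cesaro by (auto intro!: always_eventually divide_right_mono)
      have "filterlim (\<lambda>k. real (r k)) at_infinity sequentially"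
        using filterlim_compose[OF filterlim_real_sequentially filterlim_subseq[OF r(1)]]
        by (rule filterlim_at_top_imp_at_infinity)
      then show "(\<lambda>k. 2 * H / real (r k)) \<longlonglongrightarrow> 0"
        by (rule tendsto_divide_0[OF tendsto_const])
    qed
    ultimately show ?thesis using LIMSEQ_unique by fastforce
  qed
  with r(1) lim show ?thesis by (rule that)
qed

text \<open>Discrete Poisson equation up to \<open>\<eta>\<close>: \<open>h\<close> is a Cesaro sum of the iterates of \<open>u - Z\<close>, so that
  \<open>h - trans_op h\<close> telescopes.\<close>

lemma poisson_decomposition:
  assumes r: "strict_mono r" and lim: "\<And>x. x \<in> S \<Longrightarrow> (\<lambda>k. cesaro (r k) u x) \<longlonglongrightarrow> Z x"
    and harmonic: "\<And>x. x \<in> S \<Longrightarrow> trans_op Z x = Z x" and \<eta>: "\<eta> > 0"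
  obtains a h where "\<And>x. x \<in> S \<Longrightarrow> \<bar>a x\<bar> \<le> \<eta>"
    and "\<And>x. x \<in> S \<Longrightarrow> u x = Z x + a x + (h x - trans_op h x)"
proof -
  have "\<forall>\<^sub>F k in sequentially. (\<forall>x\<in>S. dist (cesaro (r k) u x) (Z x) < \<eta>) \<and> k > 0"
    using finite_S lim \<eta>
    by (intro eventually_conj eventually_ball_finite eventually_gt_at_top) (auto simp: tendsto_iff)
  then obtain k where k: "\<forall>x\<in>S. \<bar>cesaro (r k) u x - Z x\<bar> < \<eta>" "k > 0"
    by (auto simp: eventually_sequentially dist_real_def)
  define n where "n = r k"
  have n: "n > 0" unfolding n_def using strict_mono_imp_increasing[OF r, of k] k(2) by linarith
  define g where "g x = u x - Z x" for x
  define h where "h x = (\<Sum>j<n. \<Sum>i<j. (trans_op ^^ i) g x) / real n" for x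
  have "h x - trans_op h x = g x - cesaro n g x" for x
  proof -
    have "trans_op h x = (\<Sum>j<n. \<Sum>i<j. (trans_op ^^ Suc i) g x) / real n"
      unfolding h_def trans_op_divide trans_op_sum by simp
    then have "h x - trans_op h x
        = (\<Sum>j<n. \<Sum>i<j. (trans_op ^^ i) g x - (trans_op ^^ Suc i) g x) / real n"
      unfolding h_def by (simp add: sum_subtractf diff_divide_distrib)
    also have "\<dots> = (\<Sum>j<n. g x - (trans_op ^^ j) g x) / real n"
      by (subst sum_lessThan_telescope') simp
    also have "\<dots> = g x - cesaro n g x"
      unfolding cesaro_def using n by (simp add: sum_subtractf diff_divide_distrib)
    finally show ?thesis .
  qed
  then have hg: "u x = Z x + cesaro n g x + (h x - trans_op h x)" for x
    unfolding g_def by simp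
  have "cesaro n g x = cesaro n u x - Z x" if "x \<in> S" for x
    unfolding cesaro_def g_def funpow_trans_op_diff using funpow_trans_op_fixed[OF harmonic that] n
    by (simp add: sum_subtractf diff_divide_distrib)
  with k(1) have "\<bar>cesaro n g x\<bar> \<le> \<eta>" if "x \<in> S" for x
    using that unfolding n_def by force
  with hg show ?thesis by (intro that[of "cesaro n g" h]) auto
qed

definition path_step :: "('s list \<Rightarrow> real) \<Rightarrow> 's list \<Rightarrow> real" where
  "path_step F p = (\<Sum>y\<in>S. K (last p) y * F (p @ [y]))"

text \<open>\<open>path_exp x n F\<close> is the expectation of \<open>F [X\<^sub>0, \<dots>, X\<^sub>n]\<close> for the chain started in \<open>X\<^sub>0 = x\<close>,
  obtained by integrating out the last step first.\<close>

primrec path_exp :: "'s \<Rightarrow> nat \<Rightarrow> ('s list \<Rightarrow> real) \<Rightarrow> real" where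
  "path_exp x 0 F = F [x]"
| "path_exp x (Suc n) F = path_exp x n (path_step F)"

definition paths :: "'s \<Rightarrow> nat \<Rightarrow> 's list set" where
  "paths x n = {p. length p = Suc n \<and> p ! 0 = x \<and> set p \<subseteq> S
      \<and> (\<forall>i. Suc i < length p \<longrightarrow> 0 < K (p ! i) (p ! Suc i))}"

lemma singleton_paths: "x \<in> S \<Longrightarrow> [x] \<in> paths x 0"
  unfolding paths_def by auto

lemma length_paths: "p \<in> paths x n \<Longrightarrow> length p = Suc n"
  unfolding paths_def by auto

lemma nth_paths: "p \<in> paths x n \<Longrightarrow> i < length p \<Longrightarrow> p ! i \<in> S"
  unfolding paths_def by auto

lemma last_paths: "p \<in> paths x n \<Longrightarrow> last p \<in> S"
  unfolding paths_def using last_in_set[of p] by fastforce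

lemma snoc_paths:
  assumes p: "p \<in> paths x n" and y: "y \<in> S" "0 < K (last p) y"
  shows "p @ [y] \<in> paths x (Suc n)"
proof -
  have len: "length p = Suc n" using p by (rule length_paths)
  have "0 < K ((p @ [y]) ! i) ((p @ [y]) ! Suc i)" if i: "Suc i < Suc (Suc n)" for i
  proof (cases "Suc i < length p")
    case True
    then show ?thesis using p unfolding paths_def by (auto simp: nth_append)
  next
    case False
    have "p \<noteq> []" using len by auto
    then have "last p = p ! n" using len by (simp add: last_conv_nth)
    moreover have "i = n" using False i len by simp
    ultimately show ?thesis using len y by (simp add: nth_append)
  qed
  then show ?thesis using p y len unfolding paths_def by (auto simp: nth_append)
qed

lemma take_paths: "p \<in> paths x n \<Longrightarrow> j \<le> n \<Longrightarrow> take (Suc j) p \<in> paths x j"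
  unfolding paths_def by (auto dest: in_set_takeD)

lemma K_zero_or_pos: "x \<in> S \<Longrightarrow> y \<in> S \<Longrightarrow> K x y = 0 \<or> 0 < K x y"
  using K_nonneg[of x y] by linarith

lemma path_exp_mono:
  "x \<in> S \<Longrightarrow> (\<And>p. p \<in> paths x n \<Longrightarrow> F p \<le> G p) \<Longrightarrow> path_exp x n F \<le> path_exp x n G"
proof (induction n arbitrary: F G)
  case (Suc n)
  have "path_step F p \<le> path_step G p" if p: "p \<in> paths x n" for p
    unfolding path_step_def
  proof (intro sum_mono)
    fix y assume "y \<in> S"
    then show "K (last p) y * F (p @ [y]) \<le> K (last p) y * G (p @ [y])"
      using K_zero_or_pos[OF last_paths[OF p]] Suc.prems(2)[OF snoc_paths[OF p]] by fastforce
  qed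
  then show ?case using Suc by simp
qed (simp add: singleton_paths)

lemma path_exp_cong:
  "x \<in> S \<Longrightarrow> (\<And>p. p \<in> paths x n \<Longrightarrow> F p = G p) \<Longrightarrow> path_exp x n F = path_exp x n G"
  by (simp add: order_antisym path_exp_mono)

lemma path_exp_add: "path_exp x n (\<lambda>p. F p + G p) = path_exp x n F + path_exp x n G"
proof (induction n arbitrary: F G)
  case (Suc n)
  have "path_step (\<lambda>p. F p + G p) = (\<lambda>p. path_step F p + path_step G p)"
    unfolding path_step_def by (auto simp: distrib_left sum.distrib)
  then show ?case using Suc by simp
qed simp

lemma path_exp_scale: "path_exp x n (\<lambda>p. c * F p) = c * path_exp x n F"
proof (induction n arbitrary: F)
  case (Suc n)
  have "path_step (\<lambda>p. c * F p) = (\<lambda>p. c * path_step F p)"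
    unfolding path_step_def by (auto simp: sum_distrib_left mult.left_commute)
  then show ?case using Suc by simp
qed simp

lemma path_exp_sum: "finite W \<Longrightarrow> path_exp x n (\<lambda>p. \<Sum>w\<in>W. F w p) = (\<Sum>w\<in>W. path_exp x n (F w))"
  by (induction W rule: finite_induct) (auto simp: path_exp_add path_exp_scale[of _ _ 0, simplified])

lemma path_step_const: "last p \<in> S \<Longrightarrow> (\<And>y. F (p @ [y]) = c) \<Longrightarrow> path_step F p = c"
  unfolding path_step_def by (simp add: K_sum flip: sum_distrib_right)

lemma path_exp_const: "x \<in> S \<Longrightarrow> path_exp x n (\<lambda>_. c) = c"
proof (induction n)
  case (Suc n)
  then have "path_exp x n (path_step (\<lambda>_. c)) = path_exp x n (\<lambda>_. c)"
    by (intro path_exp_cong path_step_const last_paths) auto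
  then show ?case using Suc by simp
qed simp

lemma path_exp_nonneg: "x \<in> S \<Longrightarrow> (\<And>p. 0 \<le> F p) \<Longrightarrow> 0 \<le> path_exp x n F"
  using path_exp_mono[of x n "\<lambda>_. 0" F] path_exp_const[of x n 0] by simp

lemma path_exp_take:
  assumes x: "x \<in> S"
  shows "j \<le> n \<Longrightarrow> path_exp x n (\<lambda>p. F (take (Suc j) p)) = path_exp x j F"
proof (induction n)
  case (Suc n)
  show ?case
  proof (cases "j = Suc n")
    case True
    have "path_exp x (Suc n) (\<lambda>p. F (take (Suc j) p)) = path_exp x (Suc n) F"
      using True length_paths by (intro path_exp_cong[OF x]) auto
    then show ?thesis using True by simp
  next
    case False
    then have j: "j \<le> n" using Suc by simp
    have "path_exp x n (path_step (\<lambda>p. F (take (Suc j) p))) = path_exp x n (\<lambda>p. F (take (Suc j) p))"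
      using x j length_paths last_paths by (intro path_exp_cong path_step_const) auto
    then show ?thesis using Suc.IH[OF j] by simp
  qed
qed simp

lemma path_exp_union_bound:
  assumes x: "x \<in> S"
  shows "path_exp x N (\<lambda>p. of_bool (\<exists>j\<le>N. B j (take (Suc j) p)))
         \<le> (\<Sum>j\<le>N. path_exp x j (\<lambda>q. of_bool (B j q)))"
proof -
  have "path_exp x N (\<lambda>p. of_bool (\<exists>j\<le>N. B j (take (Suc j) p)))
        \<le> path_exp x N (\<lambda>p. \<Sum>j\<le>N. of_bool (B j (take (Suc j) p)))"
  proof (rule path_exp_mono[OF x])
    fix p
    show "of_bool (\<exists>j\<le>N. B j (take (Suc j) p)) \<le> (\<Sum>j\<le>N. of_bool (B j (take (Suc j) p)) :: real)"
    proof (cases "\<exists>j\<le>N. B j (take (Suc j) p)")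
      case True
      then obtain j where "j \<le> N" "B j (take (Suc j) p)" by blast
      then show ?thesis
        using member_le_sum[of j "{..N}" "\<lambda>j. of_bool (B j (take (Suc j) p)) :: real"] by auto
    qed (simp add: sum_nonneg)
  qed
  also have "\<dots> = (\<Sum>j\<le>N. path_exp x N (\<lambda>p. of_bool (B j (take (Suc j) p))))"
    by (rule path_exp_sum) simp
  also have "\<dots> = (\<Sum>j\<le>N. path_exp x j (\<lambda>q. of_bool (B j q)))"
    by (intro sum.cong refl path_exp_take[OF x]) simp
  finally show ?thesis .
qed

definition path_weight :: "'s list \<Rightarrow> real" where
  "path_weight p = (\<Prod>i<length p - 1. K (p ! i) (p ! Suc i))"

lemma path_weight_snoc: "p \<noteq> [] \<Longrightarrow> path_weight (p @ [y]) = path_weight p * K (last p) y"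
proof -
  assume "p \<noteq> []"
  then obtain k where k: "length p = Suc k" by (cases p) auto
  then have "last p = p ! k" using \<open>p \<noteq> []\<close> by (simp add: last_conv_nth)
  with k show ?thesis unfolding path_weight_def by (simp add: nth_append)
qed

lemma path_exp_eq_sum:
  assumes x: "x \<in> S"
  shows "path_exp x n F = (\<Sum>p | length p = Suc n \<and> set p \<subseteq> S \<and> p ! 0 = x. path_weight p * F p)"
proof (induction n arbitrary: F)
  case 0
  have "{p. length p = Suc 0 \<and> set p \<subseteq> S \<and> p ! 0 = x} = {[x]}"
    using x by (auto simp: length_Suc_conv)
  then show ?case by (simp add: path_weight_def)
next
  case (Suc n)
  define L where "L m = {p. length p = Suc m \<and> set p \<subseteq> S \<and> p ! 0 = x}" for m
  have snoc: "L (Suc n) = (\<lambda>(p, y). p @ [y]) ` (L n \<times> S)"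
  proof (intro equalityI subsetI)
    fix q assume q: "q \<in> L (Suc n)"
    then have "q \<noteq> []" unfolding L_def by auto
    with q have "q = butlast q @ [last q]" "butlast q \<in> L n" "last q \<in> S"
      unfolding L_def by (auto simp: nth_butlast dest: in_set_butlastD)
    then show "q \<in> (\<lambda>(p, y). p @ [y]) ` (L n \<times> S)" by force
  qed (auto simp: L_def nth_append)
  have "path_exp x (Suc n) F = (\<Sum>p\<in>L n. path_weight p * path_step F p)"
    using Suc unfolding L_def by simp
  also have "\<dots> = (\<Sum>p\<in>L n. \<Sum>y\<in>S. path_weight (p @ [y]) * F (p @ [y]))"
  proof (intro sum.cong refl)
    fix p assume "p \<in> L n"
    then have "p \<noteq> []" unfolding L_def by auto
    then show "path_weight p * path_step F p = (\<Sum>y\<in>S. path_weight (p @ [y]) * F (p @ [y]))"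
      unfolding path_step_def by (simp add: sum_distrib_left path_weight_snoc mult.assoc)
  qed
  also have "\<dots> = (\<Sum>(p, y)\<in>L n \<times> S. path_weight (p @ [y]) * F (p @ [y]))"
    by (rule sum.cartesian_product)
  also have "\<dots> = (\<Sum>q\<in>L (Suc n). path_weight q * F q)"
    unfolding snoc by (subst sum.reindex) (auto simp: inj_on_def case_prod_unfold)
  finally show ?case unfolding L_def .
qed

end

lemma power2_le_affine:
  fixes M d D :: real
  assumes "\<bar>d\<bar> \<le> D"
  shows "(M + d)\<^sup>2 \<le> M\<^sup>2 + D\<^sup>2 + 2 * M * d"
proof -
  have "d\<^sup>2 \<le> D\<^sup>2" using assms by (metis abs_le_square_iff abs_of_nonneg abs_ge_zero order_trans)
  then show ?thesis by (simp add: power2_eq_square algebra_simps)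
qed

lemma power4_le_affine:
  fixes M d D :: real
  assumes d: "\<bar>d\<bar> \<le> D"
  shows "(M + d)^4 \<le> M^4 + 6 * D\<^sup>2 * M\<^sup>2 + 4 * \<bar>M\<bar> * D^3 + D^4 + 4 * M^3 * d"
proof -
  have d2: "d\<^sup>2 \<le> D\<^sup>2" and d3: "\<bar>d\<bar>^3 \<le> D^3" and d4: "d^4 \<le> D^4"
    using power_mono[OF d, of 2] power_mono[OF d, of 3] power_mono[OF d, of 4] by simp_all
  have "M\<^sup>2 * d\<^sup>2 \<le> M\<^sup>2 * D\<^sup>2" using d2 by (rule mult_left_mono) simp
  moreover have "M * d^3 \<le> \<bar>M\<bar> * D^3"
  proof -
    have "M * d^3 \<le> \<bar>M\<bar> * \<bar>d\<bar>^3" by (metis abs_ge_self abs_mult power_abs)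
    also have "\<dots> \<le> \<bar>M\<bar> * D^3" using d3 by (rule mult_left_mono) simp
    finally show ?thesis .
  qed
  moreover have "(M + d)^4 = M^4 + 4 * M^3 * d + 6 * (M\<^sup>2 * d\<^sup>2) + 4 * (M * d^3) + d^4"
    by (simp add: power_def eval_nat_numeral algebra_simps)
  moreover have "6 * D\<^sup>2 * M\<^sup>2 + 4 * \<bar>M\<bar> * D^3 = 6 * (M\<^sup>2 * D\<^sup>2) + 4 * (\<bar>M\<bar> * D^3)"
    by (simp add: algebra_simps)
  ultimately show ?thesis using d4 by linarith
qed

lemma sum_inverse_squares_tail_le:
  assumes A: "A \<ge> (1::nat)"
  shows "(\<Sum>j<N. if Suc j \<le> A then 0 else 1 / (real (Suc j))\<^sup>2) \<le> 1 / real A"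
proof -
  have "(\<Sum>j<N. if Suc j \<le> A then 0 else 1 / (real (Suc j))\<^sup>2)
        \<le> (if N \<le> A then 0 else 1 / real A - 1 / real N)" for N
  proof (induction N)
    case (Suc N)
    show ?case
    proof (cases "Suc N \<le> A")
      case False
      then have N: "A \<le> N" "real N \<ge> 1" using A by auto
      have "1 / (real (Suc N))\<^sup>2 \<le> 1 / (real N * real (Suc N))"
        using N by (intro divide_left_mono) (auto simp: power2_eq_square intro!: mult_right_mono)
      also have "\<dots> = 1 / real N - 1 / real (Suc N)"
        using N by (simp add: field_simps)
      finally show ?thesis using Suc N False by (cases "N = A") auto
    qed (use Suc in simp)
  qed simp
  then show ?thesis by (rule order_trans) auto
qed

context markov_kernel
begin

subsection \<open>A martingale and its moments\<close>

definition mart :: "('s \<Rightarrow> real) \<Rightarrow> 's list \<Rightarrow> real" where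
  "mart h p = (\<Sum>i<length p - 1. h (p ! Suc i) - trans_op h (p ! i))"

lemma mart_singleton [simp]: "mart h [x] = 0"
  unfolding mart_def by simp

lemma mart_snoc: "p \<noteq> [] \<Longrightarrow> mart h (p @ [y]) = mart h p + (h y - trans_op h (last p))"
proof -
  assume "p \<noteq> []"
  then obtain k where k: "length p = Suc k" by (cases p) auto
  have "p ! k = last p" using k \<open>p \<noteq> []\<close> by (simp add: last_conv_nth)
  moreover from k have "mart h (p @ [y]) = (\<Sum>i<k. h (p ! Suc i) - trans_op h (p ! i)) + (h y - trans_op h (p ! k))"
    unfolding mart_def by (simp add: nth_append)
  ultimately show ?thesis unfolding mart_def k by simp
qed

lemma mart_abs_le:
  assumes p: "p \<in> paths x n" and hH: "\<And>y. y \<in> S \<Longrightarrow> \<bar>h y\<bar> \<le> H"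
  shows "\<bar>mart h p\<bar> \<le> real n * (2 * H)"
proof -
  have "\<bar>mart h p\<bar> \<le> (\<Sum>i<n. \<bar>h (p ! Suc i) - trans_op h (p ! i)\<bar>)"
    unfolding mart_def length_paths[OF p] by (simp add: sum_abs)
  also have "\<dots> \<le> (\<Sum>i<n. 2 * H)"
  proof (rule sum_mono)
    fix i assume "i \<in> {..<n}"
    then have "p ! Suc i \<in> S" "p ! i \<in> S" using nth_paths[OF p] length_paths[OF p] by auto
    then show "\<bar>h (p ! Suc i) - trans_op h (p ! i)\<bar> \<le> 2 * H"
      using hH[of "p ! Suc i"] trans_op_abs_le[where u = h, OF \<open>p ! i \<in> S\<close> hH] by linarith
  qed
  finally show ?thesis by simp
qed

text \<open>One step of \<open>mart\<close> adds an increment \<open>d\<close> with \<open>\<bar>d\<bar> \<le> 2H\<close> and conditional mean zero, so a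
  bound on \<open>\<phi> (M + d)\<close> that is affine in \<open>d\<close> survives \<open>path_step\<close> without its linear term.\<close>

lemma path_step_mart_le:
  assumes p: "p \<in> paths x n" and hH: "\<And>y. y \<in> S \<Longrightarrow> \<bar>h y\<bar> \<le> H"
    and \<phi>: "\<And>d. \<bar>d\<bar> \<le> 2 * H \<Longrightarrow> \<phi> (mart h p + d) \<le> R + c * d"
  shows "path_step (\<lambda>q. \<phi> (mart h q)) p \<le> R"
proof -
  define l where "l = last p"
  have l: "l \<in> S" unfolding l_def using p by (rule last_paths)
  have d: "\<bar>h y - trans_op h l\<bar> \<le> 2 * H" if "y \<in> S" for y
    using hH[OF that] trans_op_abs_le[where u = h, OF l hH] by linarith
  have "path_step (\<lambda>q. \<phi> (mart h q)) p = (\<Sum>y\<in>S. K l y * \<phi> (mart h p + (h y - trans_op h l)))"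
    using length_paths[OF p] unfolding path_step_def l_def by (subst mart_snoc) auto
  also have "\<dots> \<le> (\<Sum>y\<in>S. K l y * (R + c * (h y - trans_op h l)))"
    using d l by (intro sum_mono mult_left_mono \<phi> K_nonneg) auto
  also have "\<dots> = R"
  proof -
    define t where "t = trans_op h l"
    have "(\<Sum>y\<in>S. K l y * (R + c * (h y - t))) = (\<Sum>y\<in>S. R * K l y + c * (K l y * h y) - c * t * K l y)"
      by (intro sum.cong) (simp_all add: algebra_simps)
    also have "\<dots> = R * (\<Sum>y\<in>S. K l y) + c * (\<Sum>y\<in>S. K l y * h y) - c * t * (\<Sum>y\<in>S. K l y)"
      by (simp add: sum.distrib sum_subtractf sum_distrib_left)
    also have "\<dots> = R" using K_sum[OF l] unfolding t_def trans_op_def by simp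
    finally show ?thesis unfolding t_def .
  qed
  finally show ?thesis .
qed

lemma path_exp_mart_power2:
  assumes x: "x \<in> S" and hH: "\<And>y. y \<in> S \<Longrightarrow> \<bar>h y\<bar> \<le> H"
  shows "path_exp x n (\<lambda>p. (mart h p)\<^sup>2) \<le> real n * (2 * H)\<^sup>2"
proof (induction n)
  case (Suc n)
  have "path_step (\<lambda>q. (mart h q)\<^sup>2) p \<le> (mart h p)\<^sup>2 + (2 * H)\<^sup>2" if "p \<in> paths x n" for p
    by (rule path_step_mart_le[OF that hH power2_le_affine])
  then have "path_exp x (Suc n) (\<lambda>p. (mart h p)\<^sup>2) \<le> path_exp x n (\<lambda>p. (mart h p)\<^sup>2 + (2 * H)\<^sup>2)"
    by (simp add: path_exp_mono[OF x])
  also have "\<dots> \<le> real (Suc n) * (2 * H)\<^sup>2"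
    using Suc by (simp add: path_exp_add path_exp_const[OF x] algebra_simps)
  finally show ?case .
qed simp

lemma path_exp_mart_power4:
  assumes x: "x \<in> S" and hH: "\<And>y. y \<in> S \<Longrightarrow> \<bar>h y\<bar> \<le> H"
  shows "path_exp x n (\<lambda>p. (mart h p)^4) \<le> 11 * (2 * H)^4 * (real n)\<^sup>2"
proof (induction n)
  case (Suc n)
  define D where "D = 2 * H"
  have D: "D \<ge> 0" using hH[OF x] unfolding D_def by linarith
  have "path_step (\<lambda>q. (mart h q)^4) p
        \<le> (mart h p)^4 + 6 * D\<^sup>2 * (mart h p)\<^sup>2 + (4 * (real n * D) * D^3 + D^4)" if p: "p \<in> paths x n" for p
  proof -
    have "\<bar>mart h p\<bar> * D^3 \<le> real n * D * D^3"
      using mart_abs_le[OF p hH] D unfolding D_def by (intro mult_right_mono) auto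
    moreover have "path_step (\<lambda>q. (mart h q)^4) p
        \<le> (mart h p)^4 + 6 * D\<^sup>2 * (mart h p)\<^sup>2 + 4 * \<bar>mart h p\<bar> * D^3 + D^4"
      unfolding D_def by (rule path_step_mart_le[OF p hH power4_le_affine])
    ultimately show ?thesis by linarith
  qed
  then have "path_exp x (Suc n) (\<lambda>p. (mart h p)^4)
      \<le> path_exp x n (\<lambda>p. (mart h p)^4 + 6 * D\<^sup>2 * (mart h p)\<^sup>2 + (4 * (real n * D) * D^3 + D^4))"
    by (simp add: path_exp_mono[OF x])
  also have "\<dots> = path_exp x n (\<lambda>p. (mart h p)^4) + 6 * D\<^sup>2 * path_exp x n (\<lambda>p. (mart h p)\<^sup>2)
      + (4 * (real n * D) * D^3 + D^4)"
    by (simp add: path_exp_add path_exp_scale path_exp_const[OF x])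
  also have "\<dots> \<le> 11 * D^4 * (real n)\<^sup>2 + 6 * D\<^sup>2 * (real n * D\<^sup>2) + (4 * (real n * D) * D^3 + D^4)"
    using Suc path_exp_mart_power2[where h = h and n = n, OF x hH] D unfolding D_def
    by (intro add_mono mult_left_mono) auto
  also have "\<dots> \<le> 11 * D^4 * (real (Suc n))\<^sup>2"
    using D by (simp add: power2_eq_square power_def eval_nat_numeral algebra_simps)
  finally show ?case unfolding D_def .
qed simp

lemma path_exp_mart_ge_le:
  assumes x: "x \<in> S" and hH: "\<And>y. y \<in> S \<Longrightarrow> \<bar>h y\<bar> \<le> H" and t: "0 < t"
  shows "path_exp x n (\<lambda>p. of_bool (t \<le> mart h p)) \<le> 11 * (2 * H)^4 * (real n)\<^sup>2 / t^4"
proof -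
  have "path_exp x n (\<lambda>p. of_bool (t \<le> mart h p)) \<le> path_exp x n (\<lambda>p. 1 / t^4 * (mart h p)^4)"
  proof (rule path_exp_mono[OF x])
    fix p
    show "of_bool (t \<le> mart h p) \<le> 1 / t^4 * (mart h p)^4"
    proof (cases "t \<le> mart h p")
      case True
      then have "t^4 \<le> (mart h p)^4" using t by (intro power_mono) auto
      then show ?thesis using True t by simp
    qed simp
  qed
  also have "\<dots> = 1 / t^4 * path_exp x n (\<lambda>p. (mart h p)^4)" by (rule path_exp_scale)
  also have "\<dots> \<le> 1 / t^4 * (11 * (2 * H)^4 * (real n)\<^sup>2)"
    using path_exp_mart_power4[OF x hH] t by (intro mult_left_mono) auto
  finally show ?thesis by simp
qed

end

section \<open>Stationary finite Markov chains\<close>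

locale stationary_chain = markov_kernel S K for S :: "'s set" and K +
  fixes m :: "'s \<Rightarrow> real"
  assumes m_pos: "\<And>x. x \<in> S \<Longrightarrow> 0 < m x"
    and m_sum: "(\<Sum>x\<in>S. m x) = 1"
    and m_stationary: "\<And>y. y \<in> S \<Longrightarrow> (\<Sum>x\<in>S. m x * K x y) = m y"
begin

definition mean :: "('s \<Rightarrow> real) \<Rightarrow> real" where
  "mean u = (\<Sum>x\<in>S. m x * u x)"

lemma mean_trans_op: "mean (trans_op u) = mean u"
proof -
  have "mean (trans_op u) = (\<Sum>x\<in>S. \<Sum>y\<in>S. m x * K x y * u y)"
    unfolding mean_def trans_op_def by (simp add: sum_distrib_left mult.assoc)
  also have "\<dots> = (\<Sum>y\<in>S. (\<Sum>x\<in>S. m x * K x y) * u y)"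
    by (subst sum.swap) (simp add: sum_distrib_right)
  also have "\<dots> = mean u"
    unfolding mean_def by (intro sum.cong) (simp_all add: m_stationary)
  finally show ?thesis .
qed

lemma mean_funpow_trans_op: "mean ((trans_op ^^ j) u) = mean u"
  by (induction j) (simp_all add: mean_trans_op)

lemma mean_cesaro: "n > 0 \<Longrightarrow> mean (cesaro n u) = mean u"
proof -
  assume "n > 0"
  have "mean (cesaro n u) = (\<Sum>j<n. mean ((trans_op ^^ j) u)) / real n"
    unfolding cesaro_def mean_def by (simp add: sum_divide_distrib sum_distrib_left sum.swap[of _ S])
  then show ?thesis using \<open>n > 0\<close> by (simp add: mean_funpow_trans_op)
qed

lemma mean_nonneg: "(\<And>x. x \<in> S \<Longrightarrow> 0 \<le> u x) \<Longrightarrow> 0 \<le> mean u"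
  unfolding mean_def using m_pos by (intro sum_nonneg) (simp add: less_imp_le)

lemma ex_le_mean: "\<exists>x\<in>S. u x \<le> mean u"
proof (rule ccontr)
  assume "\<not> ?thesis"
  then have less: "mean u < u x" if "x \<in> S" for x
    using that by force
  have "S \<noteq> {}" using m_sum by auto
  then have "(\<Sum>x\<in>S. m x * mean u) < (\<Sum>x\<in>S. m x * u x)"
    using finite_S m_pos less by (intro sum_strict_mono mult_strict_left_mono) auto
  then show False unfolding mean_def by (simp add: m_sum flip: sum_distrib_right)
qed

text \<open>A harmonic function has zero variance under each transition, averaged over the
  stationary measure, so it is constant along every transition of positive probability.\<close>

lemma harmonic_const_on_transitions:
  assumes harmonic: "\<And>x. x \<in> S \<Longrightarrow> trans_op Z x = Z x"
    and xy: "x \<in> S" "y \<in> S" "0 < K x y"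
  shows "Z y = Z x"
proof -
  define V where "V x = (\<Sum>y\<in>S. K x y * (Z y - Z x)\<^sup>2)" for x
  have V_nonneg: "0 \<le> V x" if "x \<in> S" for x
    unfolding V_def using that K_nonneg by (intro sum_nonneg) auto
  have V_eq: "V x = trans_op (\<lambda>y. (Z y)\<^sup>2) x - (Z x)\<^sup>2" if x: "x \<in> S" for x
  proof -
    have "V x = (\<Sum>y\<in>S. K x y * (Z y)\<^sup>2 - 2 * Z x * (K x y * Z y) + (Z x)\<^sup>2 * K x y)"
      unfolding V_def by (intro sum.cong) (auto simp: power2_eq_square algebra_simps)
    also have "\<dots> = trans_op (\<lambda>y. (Z y)\<^sup>2) x - 2 * Z x * trans_op Z x + (Z x)\<^sup>2 * (\<Sum>y\<in>S. K x y)"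
      unfolding trans_op_def by (simp add: sum.distrib sum_subtractf sum_distrib_left)
    finally show ?thesis using harmonic[OF x] K_sum[OF x] by (simp add: power2_eq_square)
  qed
  have "(\<Sum>x\<in>S. m x * V x) = mean (trans_op (\<lambda>y. (Z y)\<^sup>2)) - mean (\<lambda>y. (Z y)\<^sup>2)"
    unfolding mean_def by (simp add: V_eq right_diff_distrib sum_subtractf)
  then have "(\<Sum>x\<in>S. m x * V x) = 0" by (simp add: mean_trans_op)
  then have "m x * V x = 0"
    using finite_S xy(1) V_nonneg m_pos
    by (subst (asm) sum_nonneg_eq_0_iff) (auto intro: mult_nonneg_nonneg less_imp_le)
  then have "V x = 0" using m_pos[OF xy(1)] by simp
  then have "K x y * (Z y - Z x)\<^sup>2 = 0"
    using finite_S xy K_nonneg unfolding V_def by (subst (asm) sum_nonneg_eq_0_iff) auto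
  then show ?thesis using xy(3) by simp
qed

lemma harmonic_const_on_paths:
  assumes harmonic: "\<And>x. x \<in> S \<Longrightarrow> trans_op Z x = Z x" and p: "p \<in> paths x n"
  shows "i < length p \<Longrightarrow> Z (p ! i) = Z x"
proof (induction i)
  case 0
  then show ?case using p unfolding paths_def by auto
next
  case (Suc i)
  then have "Z (p ! Suc i) = Z (p ! i)"
    using p nth_paths[OF p] unfolding paths_def
    by (intro harmonic_const_on_transitions[OF harmonic]) auto
  then show ?case using Suc by simp
qed

definition path_cost :: "('s \<Rightarrow> real) \<Rightarrow> 's list \<Rightarrow> real" where
  "path_cost f p = (\<Sum>i<length p. f (p ! i))"

lemma path_cost_le_mart:
  assumes p: "p \<in> paths x n" and harmonic: "\<And>y. y \<in> S \<Longrightarrow> trans_op Z y = Z y"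
    and a: "\<And>y. y \<in> S \<Longrightarrow> \<bar>a y\<bar> \<le> \<eta>"
    and dec: "\<And>y. y \<in> S \<Longrightarrow> f y = Z y + a y + (h y - trans_op h y)"
    and hH: "\<And>y. y \<in> S \<Longrightarrow> \<bar>h y\<bar> \<le> H"
  shows "path_cost f p \<le> real (Suc n) * (Z x + \<eta>) + 2 * H + mart h p"
proof -
  have len: "length p = Suc n" using p by (rule length_paths)
  have inS: "p ! i \<in> S" if "i < Suc n" for i using nth_paths[OF p] len that by simp
  have "path_cost f p = (\<Sum>i<Suc n. Z x + a (p ! i) + (h (p ! i) - trans_op h (p ! i)))"
    unfolding path_cost_def len using dec inS harmonic_const_on_paths[OF harmonic p] len
    by (intro sum.cong) auto
  also have "\<dots> = real (Suc n) * Z x + (\<Sum>i<Suc n. a (p ! i))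
      + (\<Sum>i<Suc n. h (p ! i) - trans_op h (p ! i))"
    by (simp add: sum.distrib)
  also have "(\<Sum>i<Suc n. h (p ! i) - trans_op h (p ! i)) = h (p ! 0) - trans_op h (p ! n) + mart h p"
  proof -
    have "(\<Sum>i<Suc n. h (p ! i)) = h (p ! 0) + (\<Sum>i<n. h (p ! Suc i))"
      by (rule sum.lessThan_Suc_shift)
    moreover have "mart h p = (\<Sum>i<n. h (p ! Suc i)) - (\<Sum>i<n. trans_op h (p ! i))"
      unfolding mart_def len by (simp add: sum_subtractf)
    ultimately show ?thesis by (simp add: sum_subtractf)
  qed
  also have "(\<Sum>i<Suc n. a (p ! i)) \<le> real (Suc n) * \<eta>"
    using sum_mono[of "{..<Suc n}" "\<lambda>i. a (p ! i)" "\<lambda>_. \<eta>"] a inS by (force simp: abs_le_iff)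
  also have "h (p ! 0) - trans_op h (p ! n) \<le> 2 * H"
    using hH[OF inS] trans_op_abs_le[where u = h, OF inS hH, of n] by (force simp: abs_le_iff)
  finally show ?thesis by (simp add: algebra_simps)
qed

lemma path_exp_cost_exceeds_eq_0:
  fixes A :: nat
  assumes x: "x \<in> S" and f: "\<And>y. y \<in> S \<Longrightarrow> 0 \<le> f y \<and> f y \<le> 1" and s: "0 \<le> s"
    and A: "Suc n \<le> A"
  shows "path_exp x n (\<lambda>p. of_bool (real (Suc n) * (mean f + s) + real A < path_cost f p)) = 0"
proof -
  have "path_cost f p \<le> real (Suc n) * (mean f + s) + real A" if p: "p \<in> paths x n" for p
  proof -
    have "path_cost f p \<le> real (Suc n)"
      using sum_mono[of "{..<Suc n}" "\<lambda>i. f (p ! i)" "\<lambda>_. 1"] f nth_paths[OF p]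
      unfolding path_cost_def length_paths[OF p] by force
    moreover have "0 \<le> real (Suc n) * (mean f + s)"
      using f s by (intro mult_nonneg_nonneg add_nonneg_nonneg mean_nonneg) auto
    ultimately show ?thesis using A by linarith
  qed
  then have "path_exp x n (\<lambda>p. of_bool (real (Suc n) * (mean f + s) + real A < path_cost f p))
      = path_exp x n (\<lambda>_. 0)"
    by (intro path_exp_cong[OF x]) (simp add: not_less)
  then show ?thesis by (simp add: path_exp_const[OF x])
qed

text \<open>Exceeding the bound forces \<open>mart h p \<ge> (n + 1) s / 2\<close>.\<close>

lemma path_exp_cost_exceeds_le:
  fixes A :: nat
  assumes x: "x \<in> S" and harmonic: "\<And>y. y \<in> S \<Longrightarrow> trans_op Z y = Z y"
    and Zx: "Z x \<le> mean f" and s: "s > 0"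
    and a: "\<And>y. y \<in> S \<Longrightarrow> \<bar>a y\<bar> \<le> s / 2"
    and dec: "\<And>y. y \<in> S \<Longrightarrow> f y = Z y + a y + (h y - trans_op h y)"
    and hH: "\<And>y. y \<in> S \<Longrightarrow> \<bar>h y\<bar> \<le> H" and A: "2 * H \<le> real A"
  shows "path_exp x n (\<lambda>p. of_bool (real (Suc n) * (mean f + s) + real A < path_cost f p))
         \<le> 176 * (2 * H)^4 / s^4 / (real (Suc n))\<^sup>2"
proof -
  define t where "t = real (Suc n) * s / 2"
  have t: "t > 0" unfolding t_def using s by simp
  have H: "H \<ge> 0" using hH[OF x] by linarith
  have "path_exp x n (\<lambda>p. of_bool (real (Suc n) * (mean f + s) + real A < path_cost f p))
        \<le> path_exp x n (\<lambda>p. of_bool (t \<le> mart h p))"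
  proof (rule path_exp_mono[OF x])
    fix p assume p: "p \<in> paths x n"
    show "of_bool (real (Suc n) * (mean f + s) + real A < path_cost f p) \<le> (of_bool (t \<le> mart h p) :: real)"
    proof (cases "real (Suc n) * (mean f + s) + real A < path_cost f p")
      case True
      have "path_cost f p \<le> real (Suc n) * (Z x + s / 2) + 2 * H + mart h p"
        by (rule path_cost_le_mart[OF p harmonic a dec hH])
      moreover have "real (Suc n) * Z x \<le> real (Suc n) * mean f"
        using Zx by (intro mult_left_mono) auto
      moreover have "real (Suc n) * (Z x + s / 2) = real (Suc n) * Z x + t"
        "real (Suc n) * (mean f + s) = real (Suc n) * mean f + 2 * t"
        unfolding t_def by (simp_all add: algebra_simps)
      ultimately have "t \<le> mart h p" using True A t by linarith
      then show ?thesis by simp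
    qed simp
  qed
  also have "\<dots> \<le> 11 * (2 * H)^4 * (real n)\<^sup>2 / t^4"
    by (rule path_exp_mart_ge_le[OF x hH t])
  also have "\<dots> \<le> 11 * (2 * H)^4 * (real (Suc n))\<^sup>2 / t^4"
    using H t by (intro divide_right_mono mult_left_mono power_mono) auto
  also have "\<dots> = 176 * (2 * H)^4 / s^4 / (real (Suc n))\<^sup>2"
  proof -
    define y where "y = real (Suc n)"
    have t4: "t^4 = y\<^sup>2 * y\<^sup>2 * s^4 / 16" unfolding t_def y_def[symmetric]
      by (simp add: power_mult_distrib power_divide power2_eq_square power_def eval_nat_numeral)
    have "y > 0" unfolding y_def by simp
    then show ?thesis using s unfolding t4 y_def[symmetric] by (simp add: field_simps power2_eq_square)
  qed
  finally show ?thesis .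
qed

text \<open>Union bound over the prefixes and summation of the tail of \<open>\<Sum> 1/j\<^sup>2\<close>.\<close>

lemma path_exp_some_prefix_cost_exceeds_le:
  fixes A :: nat
  assumes x: "x \<in> S" and f: "\<And>y. y \<in> S \<Longrightarrow> 0 \<le> f y \<and> f y \<le> 1"
    and harmonic: "\<And>y. y \<in> S \<Longrightarrow> trans_op Z y = Z y" and Zx: "Z x \<le> mean f" and s: "s > 0"
    and a: "\<And>y. y \<in> S \<Longrightarrow> \<bar>a y\<bar> \<le> s / 2"
    and dec: "\<And>y. y \<in> S \<Longrightarrow> f y = Z y + a y + (h y - trans_op h y)"
    and hH: "\<And>y. y \<in> S \<Longrightarrow> \<bar>h y\<bar> \<le> H" and A: "2 * H \<le> real A" "1 \<le> A"
  shows "path_exp x N (\<lambda>p. of_bool (\<exists>j\<le>N. real (Suc j) * (mean f + s) + real A < path_cost f (take (Suc j) p)))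
    \<le> 176 * (2 * H)^4 / s^4 / real A"
proof -
  define C where "C = 176 * (2 * H)^4 / s^4"
  have C: "C \<ge> 0" unfolding C_def by simp
  have "path_exp x N (\<lambda>p. of_bool (\<exists>j\<le>N. real (Suc j) * (mean f + s) + real A < path_cost f (take (Suc j) p)))
      \<le> (\<Sum>j\<le>N. path_exp x j (\<lambda>q. of_bool (real (Suc j) * (mean f + s) + real A < path_cost f q)))"
    by (rule path_exp_union_bound[OF x])
  also have "\<dots> \<le> (\<Sum>j<Suc N. C * (if Suc j \<le> A then 0 else 1 / (real (Suc j))\<^sup>2))"
    unfolding lessThan_Suc_atMost
  proof (rule sum_mono)
    fix j
    show "path_exp x j (\<lambda>q. of_bool (real (Suc j) * (mean f + s) + real A < path_cost f q))
        \<le> C * (if Suc j \<le> A then 0 else 1 / (real (Suc j))\<^sup>2)"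
    proof (cases "Suc j \<le> A")
      case True
      then show ?thesis using path_exp_cost_exceeds_eq_0[OF x f, where s = s and n = j] s by simp
    next
      case False
      then have "C * (if Suc j \<le> A then 0 else 1 / (real (Suc j))\<^sup>2) = C / (real (Suc j))\<^sup>2"
        by simp
      then show ?thesis unfolding C_def
        using path_exp_cost_exceeds_le[OF x harmonic Zx s a dec hH A(1), where n = j] by simp
    qed
  qed
  also have "\<dots> = C * (\<Sum>j<Suc N. if Suc j \<le> A then 0 else 1 / (real (Suc j))\<^sup>2)"
    by (rule sum_distrib_left[symmetric])
  also have "\<dots> \<le> C * (1 / real A)"
    using A by (intro mult_left_mono[OF sum_inverse_squares_tail_le C]) auto
  finally show ?thesis unfolding C_def by simp
qed

lemma path_exp_prefix_costs_bounded:
  assumes x: "x \<in> S" and f: "\<And>y. y \<in> S \<Longrightarrow> 0 \<le> f y \<and> f y \<le> 1"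
    and harmonic: "\<And>y. y \<in> S \<Longrightarrow> trans_op Z y = Z y" and Zx: "Z x \<le> mean f" and s: "s > 0"
    and a: "\<And>y. y \<in> S \<Longrightarrow> \<bar>a y\<bar> \<le> s / 2"
    and dec: "\<And>y. y \<in> S \<Longrightarrow> f y = Z y + a y + (h y - trans_op h y)"
  shows "\<exists>C A0. \<forall>A\<ge>A0. \<forall>N. 1 - C / real A \<le>
    path_exp x N (\<lambda>p. of_bool (\<forall>j\<le>N. path_cost f (take (Suc j) p) \<le> real (Suc j) * (mean f + s) + real A))"
proof -
  define H where "H = (\<Sum>y\<in>S. \<bar>h y\<bar>)"
  have hH: "\<bar>h y\<bar> \<le> H" if "y \<in> S" for y
    unfolding H_def using finite_S that by (intro member_le_sum) auto
  have "1 - 176 * (2 * H)^4 / s^4 / real A \<le>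
    path_exp x N (\<lambda>p. of_bool (\<forall>j\<le>N. path_cost f (take (Suc j) p) \<le> real (Suc j) * (mean f + s) + real A))"
    if A: "max 1 (nat \<lceil>2 * H\<rceil>) \<le> A" for A N
  proof -
    have "path_exp x N (\<lambda>p. of_bool (\<forall>j\<le>N. path_cost f (take (Suc j) p) \<le> real (Suc j) * (mean f + s) + real A))
        = path_exp x N (\<lambda>p. 1 + (-1) * of_bool (\<exists>j\<le>N. real (Suc j) * (mean f + s) + real A < path_cost f (take (Suc j) p)))"
      by (rule arg_cong[where f = "path_exp x N"]) (auto simp: fun_eq_iff not_le)
    moreover have "2 * H \<le> real A" "1 \<le> A" using A by linarith+
    ultimately show ?thesis
      using path_exp_some_prefix_cost_exceeds_le[OF x f harmonic Zx s a dec hH, of A N]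
      unfolding path_exp_add path_exp_scale path_exp_const[OF x] by simp
  qed
  then show ?thesis by blast
qed

text \<open>The state \<open>x\<close> is one where the harmonic limit of the Cesaro averages of \<open>f\<close> is at most
  its mean.\<close>

theorem ex_state_prefix_costs_bounded:
  assumes f: "\<And>y. y \<in> S \<Longrightarrow> 0 \<le> f y \<and> f y \<le> 1"
  shows "\<exists>x\<in>S. \<forall>s>0. \<exists>C A0. \<forall>A\<ge>A0. \<forall>N. 1 - C / real A \<le>
    path_exp x N (\<lambda>p. of_bool (\<forall>j\<le>N. path_cost f (take (Suc j) p) \<le> real (Suc j) * (mean f + s) + real A))"
proof -
  obtain r Z where r: "strict_mono r" and lim: "\<And>x. x \<in> S \<Longrightarrow> (\<lambda>k. cesaro (r k) f x) \<longlonglongrightarrow> Z x"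
    and harmonic: "\<And>x. x \<in> S \<Longrightarrow> trans_op Z x = Z x"
    using harmonic_cesaro_limit[where u = f] by blast
  have "(\<lambda>k. mean (cesaro (r k) f)) \<longlonglongrightarrow> mean Z"
    unfolding mean_def by (intro tendsto_intros lim) auto
  moreover have "(\<lambda>k. mean (cesaro (r k) f)) \<longlonglongrightarrow> mean f"
  proof (rule tendsto_eventually, rule eventually_mono[OF eventually_gt_at_top[of 0]])
    fix k :: nat assume "k > 0"
    then have "r k > 0" using strict_mono_imp_increasing[OF r, of k] by linarith
    then show "mean (cesaro (r k) f) = mean f" by (rule mean_cesaro)
  qed
  ultimately have "mean Z = mean f" by (rule LIMSEQ_unique)
  moreover obtain x where x: "x \<in> S" "Z x \<le> mean Z" using ex_le_mean by blast
  ultimately have Zx: "Z x \<le> mean f" by simp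
  have "\<exists>C A0. \<forall>A\<ge>A0. \<forall>N. 1 - C / real A \<le>
    path_exp x N (\<lambda>p. of_bool (\<forall>j\<le>N. path_cost f (take (Suc j) p) \<le> real (Suc j) * (mean f + s) + real A))"
    if s: "s > 0" for s
  proof -
    obtain a h where a: "\<And>y. y \<in> S \<Longrightarrow> \<bar>a y\<bar> \<le> s / 2"
      and dec: "\<And>y. y \<in> S \<Longrightarrow> f y = Z y + a y + (h y - trans_op h y)"
      using poisson_decomposition[OF r lim harmonic, of "s / 2"] s by auto
    show ?thesis by (rule path_exp_prefix_costs_bounded[OF x(1) f harmonic Zx s a dec])
  qed
  with x(1) show ?thesis by blast
qed

end

section \<open>The Markov chain of a stationary edge measure\<close>

locale graph_chain =
  fixes G :: "('v, 'e, 'a::finite) lgraph" and P :: "'e \<Rightarrow> real"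
  assumes wf: "wf_lgraph G" and stationary: "stationary_mc G P"
begin

lemma finite_edges: "finite (edges G)"
  using wf unfolding wf_lgraph_def by auto

lemma src_tgt_in_verts: "e \<in> edges G \<Longrightarrow> src G e \<in> verts G \<and> tgt G e \<in> verts G"
  using wf unfolding wf_lgraph_def by auto

lemma P_nonneg: "e \<in> edges G \<Longrightarrow> 0 \<le> P e"
  using stationary unfolding stationary_mc_def by auto

lemma mc_pi_pos: "v \<in> verts G \<Longrightarrow> 0 < mc_pi G P v"
  using stationary unfolding stationary_mc_def by auto

lemma mc_Q_nonneg: "e \<in> edges G \<Longrightarrow> 0 \<le> mc_Q G P e"
  unfolding mc_Q_def using P_nonneg mc_pi_pos src_tgt_in_verts by (simp add: less_imp_le)

definition edge_kernel :: "'e \<Rightarrow> 'e \<Rightarrow> real" where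
  "edge_kernel e e' = (if tgt G e = src G e' then mc_Q G P e' else 0)"

sublocale markov_kernel "edges G" edge_kernel
proof
  show "finite (edges G)" by (rule finite_edges)
  show "0 \<le> edge_kernel e e'" if "e' \<in> edges G" for e e'
    unfolding edge_kernel_def using mc_Q_nonneg that by simp
  fix e assume e: "e \<in> edges G"
  have "(\<Sum>e'\<in>edges G. edge_kernel e e') = (\<Sum>e' | e' \<in> edges G \<and> src G e' = tgt G e. mc_Q G P e')"
    unfolding edge_kernel_def using finite_edges by (simp add: sum.inter_filter eq_commute)
  also have "\<dots> = (\<Sum>e' | e' \<in> edges G \<and> src G e' = tgt G e. P e') / mc_pi G P (tgt G e)"
    unfolding mc_Q_def by (simp add: sum_divide_distrib)
  also have "\<dots> = 1" using mc_pi_pos[of "tgt G e"] src_tgt_in_verts[OF e] by (simp add: mc_pi_def)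
  finally show "(\<Sum>e'\<in>edges G. edge_kernel e e') = 1" .
qed

lemma path_weight_edge_kernel:
  assumes "length p = Suc n" "set p \<subseteq> edges G"
  shows "path_weight p = (if p \<in> gpaths G (Suc n) then \<Prod>i<n. mc_Q G P (p ! Suc i) else 0)"
proof (cases "p \<in> gpaths G (Suc n)")
  case True
  then show ?thesis using assms unfolding path_weight_def edge_kernel_def gpaths_def by simp
next
  case False
  then obtain i where "i < n" "tgt G (p ! i) \<noteq> src G (p ! Suc i)"
    using assms unfolding gpaths_def by auto
  then show ?thesis using False assms unfolding path_weight_def edge_kernel_def
    by (auto intro!: bexI[of _ i])
qed

lemma hmm_cyl_eq_path_exp:
  assumes w: "length w = Suc n"
  shows "hmm_cyl G P w = (\<Sum>e\<in>edges G. P e * path_exp e n (\<lambda>q. of_bool (map (lab G) q = w)))"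
proof -
  define L where "L = {p. length p = Suc n \<and> set p \<subseteq> edges G}"
  define g where "g p = P (p ! 0) * path_weight p * of_bool (map (lab G) p = w)" for p
  have fin: "finite L"
    unfolding L_def by (rule finite_subset[OF _ finite_lists_length_eq[OF finite_edges, of "Suc n"]]) auto
  have "(\<Sum>e\<in>edges G. P e * path_exp e n (\<lambda>q. of_bool (map (lab G) q = w)))
      = (\<Sum>e\<in>edges G. sum g {p \<in> L. p ! 0 = e})"
    unfolding g_def L_def
    by (intro sum.cong refl) (simp add: path_exp_eq_sum sum_distrib_left mult.assoc conj_assoc)
  also have "\<dots> = sum g L"
    using fin finite_edges by (intro sum.group) (auto simp: L_def)
  also have "\<dots> = (\<Sum>es | es \<in> gpaths G (Suc n) \<and> map (lab G) es = w.
      P (es ! 0) * (\<Prod>i\<in>{1..<Suc n}. mc_Q G P (es ! i)))"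
  proof (rule sum.mono_neutral_cong_right[OF fin])
    show "{es. es \<in> gpaths G (Suc n) \<and> map (lab G) es = w} \<subseteq> L"
      unfolding L_def gpaths_def by auto
    show "\<forall>p\<in>L - {es. es \<in> gpaths G (Suc n) \<and> map (lab G) es = w}. g p = 0"
      unfolding g_def L_def by (auto simp: path_weight_edge_kernel)
    show "g es = P (es ! 0) * (\<Prod>i\<in>{1..<Suc n}. mc_Q G P (es ! i))"
      if "es \<in> {es. es \<in> gpaths G (Suc n) \<and> map (lab G) es = w}" for es
    proof -
      have "(\<Prod>i\<in>{1..<Suc n}. mc_Q G P (es ! i)) = (\<Prod>i<n. mc_Q G P (es ! Suc i))"
        by (simp only: One_nat_def prod.shift_bounds_Suc_ivl atLeast0LessThan)
      then show ?thesis using that unfolding g_def gpaths_def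
        by (simp add: path_weight_edge_kernel gpaths_def)
    qed
  qed
  also have "\<dots> = hmm_cyl G P w"
  proof -
    have "w \<noteq> []" using w by auto
    then show ?thesis unfolding hmm_cyl_def w by simp
  qed
  finally show ?thesis ..
qed

lemma sum_hmm_cyl_eq_path_exp:
  "(\<Sum>w | length w = Suc n \<and> w \<in> W. hmm_cyl G P w)
    = (\<Sum>e\<in>edges G. P e * path_exp e n (\<lambda>q. of_bool (map (lab G) q \<in> W)))"
proof -
  define Wn where "Wn = {w. length w = Suc n \<and> w \<in> W}"
  have fin: "finite Wn" unfolding Wn_def by (rule finite_words_length)
  have eq: "path_exp e n (\<lambda>q. of_bool (map (lab G) q \<in> W))
      = (\<Sum>w\<in>Wn. path_exp e n (\<lambda>q. of_bool (map (lab G) q = w)))" if e: "e \<in> edges G" for e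
  proof -
    have "path_exp e n (\<lambda>q. of_bool (map (lab G) q \<in> W))
        = path_exp e n (\<lambda>q. \<Sum>w\<in>Wn. of_bool (map (lab G) q = w))"
      using fin length_paths by (intro path_exp_cong[OF e]) (auto simp: Wn_def)
    also have "\<dots> = (\<Sum>w\<in>Wn. path_exp e n (\<lambda>q. of_bool (map (lab G) q = w)))"
      by (rule path_exp_sum[OF fin])
    finally show ?thesis .
  qed
  have "(\<Sum>w\<in>Wn. hmm_cyl G P w)
      = (\<Sum>w\<in>Wn. \<Sum>e\<in>edges G. P e * path_exp e n (\<lambda>q. of_bool (map (lab G) q = w)))"
    by (intro sum.cong) (simp_all add: hmm_cyl_eq_path_exp Wn_def)
  also have "\<dots> = (\<Sum>e\<in>edges G. \<Sum>w\<in>Wn. P e * path_exp e n (\<lambda>q. of_bool (map (lab G) q = w)))"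
    by (rule sum.swap)
  also have "\<dots> = (\<Sum>e\<in>edges G. P e * path_exp e n (\<lambda>q. of_bool (map (lab G) q \<in> W)))"
    by (intro sum.cong refl) (simp add: eq sum_distrib_left)
  finally show ?thesis unfolding Wn_def .
qed

lemma hmm_cyl_nonneg: "0 \<le> hmm_cyl G P w"
  unfolding hmm_cyl_def using P_nonneg mc_Q_nonneg
  by (auto intro!: sum_nonneg mult_nonneg_nonneg prod_nonneg simp: gpaths_def nth_mem subset_iff)

text \<open>A word of positive probability is read along a path of edges of positive weight, and
  such paths extend to bi-infinite ones.\<close>

lemma hmm_cyl_nonzero_imp_Bn:
  assumes w: "w \<noteq> []" and nz: "hmm_cyl G P w \<noteq> 0"
  shows "w \<in> Bn (presented G) (length w)"
proof -
  define D where "D = {e\<in>edges G. P e > 0}"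
  have circ: "\<And>v. v \<in> verts G \<Longrightarrow>
      (\<Sum>e | e \<in> edges G \<and> src G e = v. P e) = (\<Sum>e | e \<in> edges G \<and> tgt G e = v. P e)"
    using stationary unfolding stationary_mc_def by auto
  have succ: "\<And>e. e \<in> D \<Longrightarrow> \<exists>e'\<in>D. src G e' = tgt G e"
    unfolding D_def using positive_circulation_succ[OF finite_edges src_tgt_in_verts P_nonneg circ] by auto
  have pred: "\<And>e. e \<in> D \<Longrightarrow> \<exists>e'\<in>D. tgt G e' = src G e"
    unfolding D_def using positive_circulation_pred[OF finite_edges src_tgt_in_verts P_nonneg circ] by auto
  have "(\<Sum>es | es \<in> gpaths G (length w) \<and> map (lab G) es = w.
      P (es ! 0) * (\<Prod>i\<in>{1..<length w}. mc_Q G P (es ! i))) \<noteq> 0"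
    using nz w unfolding hmm_cyl_def by simp
  then obtain es where "es \<in> {es. es \<in> gpaths G (length w) \<and> map (lab G) es = w}"
    and nz_es: "P (es ! 0) * (\<Prod>i\<in>{1..<length w}. mc_Q G P (es ! i)) \<noteq> 0"
    by (rule sum.not_neutral_contains_not_neutral)
  then have es: "es \<in> gpaths G (length w)" "map (lab G) es = w" by auto
  have les: "length es = length w" and sub: "set es \<subseteq> edges G"
    and chain: "\<And>i. Suc i < length es \<Longrightarrow> tgt G (es ! i) = src G (es ! Suc i)"
    using es unfolding gpaths_def by auto
  have "es ! i \<in> D" if i: "i < length es" for i
  proof -
    have "P (es ! i) \<noteq> 0"
    proof (cases "i = 0")
      case False
      then have "mc_Q G P (es ! i) \<noteq> 0" using nz_es i les by auto
      then show ?thesis unfolding mc_Q_def by auto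
    qed (use nz_es in auto)
    moreover have "es ! i \<in> edges G" using sub i by auto
    ultimately show ?thesis using P_nonneg unfolding D_def by force
  qed
  then have "set es \<subseteq> D" by (auto simp: in_set_conv_nth)
  moreover have "es \<noteq> []" using w les by auto
  ultimately have "map (lab G) es \<in> Bn (presented G) (length es)"
    by (intro Bn_presented_of_finite_path[OF _ succ pred _ _ chain]) (auto simp: D_def)
  then show ?thesis using es(2) les by simp
qed

lemma marginal_inter_Bn_presented:
  assumes hmm: "hidden_markov_measure G P \<mu>" and n: "0 < n"
  shows "marginal \<mu> n (Bn (presented G) n \<inter> W) = marginal \<mu> n W"
  unfolding marginal_eq_sum_hmm_cyl[OF hmm]
  using n hmm_cyl_nonzero_imp_Bn finite_words_length
  by (intro sum.mono_neutral_left) auto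

end

section \<open>Sequences tracked by a constrained system\<close>

definition near_words :: "(int \<Rightarrow> 'a) set \<Rightarrow> nat \<Rightarrow> real \<Rightarrow> 'a list set" where
  "near_words X n T = {w. \<exists>x\<in>Bn X n. real (hamming x w) \<le> T}"

definition tracked :: "(int \<Rightarrow> 'a) set \<Rightarrow> real \<Rightarrow> nat \<Rightarrow> (int \<Rightarrow> 'a) set" where
  "tracked X c A = {y. \<forall>n. word_at y n \<in> near_words X n (real n * c + real A)}"

definition trackable :: "(int \<Rightarrow> 'a) set \<Rightarrow> real \<Rightarrow> (int \<Rightarrow> 'a) set" where
  "trackable X c = (\<Union>A. tracked X c A)"

lemma near_words_mono: "T \<le> T' \<Longrightarrow> near_words X n T \<subseteq> near_words X n T'"
  unfolding near_words_def by force

lemma Nil_in_near_words: "X \<noteq> {} \<Longrightarrow> 0 \<le> T \<Longrightarrow> [] \<in> near_words X 0 T"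
  unfolding near_words_def Bn_def by (auto simp: hamming_def)

lemma word_at_shift_in_near_words:
  assumes "word_at y (Suc n) \<in> near_words X (Suc n) T"
  shows "word_at (shift y) n \<in> near_words X n T"
proof -
  obtain x where x: "x \<in> Bn X (Suc n)" "real (hamming x (word_at y (Suc n))) \<le> T"
    using assms unfolding near_words_def by auto
  have "hamming (tl x) (tl (word_at y (Suc n))) \<le> hamming x (word_at y (Suc n))"
    using length_Bn[OF x(1)] by (intro hamming_tl_le) simp
  then show ?thesis
    using Bn_tl[OF x(1)] x(2) unfolding near_words_def word_at_Suc by force
qed

lemma word_at_Suc_in_near_words:
  assumes "word_at (shift y) n \<in> near_words X n T"
  shows "word_at y (Suc n) \<in> near_words X (Suc n) (T + 1)"
proof -
  obtain x where x: "x \<in> Bn X n" "real (hamming x (word_at (shift y) n)) \<le> T"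
    using assms unfolding near_words_def by auto
  obtain a where a: "a # x \<in> Bn X (Suc n)" using Bn_Cons_ex[OF x(1)] by blast
  have "hamming (a # x) (y 0 # word_at (shift y) n) \<le> hamming x (word_at (shift y) n) + 1"
    using length_Bn[OF x(1)] by (intro hamming_Cons_le) simp
  then show ?thesis using a x(2) unfolding near_words_def word_at_Suc by force
qed

lemma tracked_mono: "A \<le> A' \<Longrightarrow> tracked X c A \<subseteq> tracked X c A'"
  unfolding tracked_def using near_words_mono by (smt (verit) mem_Collect_eq of_nat_mono subset_eq)

lemma shift_tracked:
  assumes c: "0 \<le> c" and y: "y \<in> tracked X c A"
  shows "shift y \<in> tracked X c (A + nat \<lceil>c\<rceil>)"
  unfolding tracked_def
proof (intro CollectI allI)
  fix n
  have "word_at (shift y) n \<in> near_words X n (real (Suc n) * c + real A)"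
    using y unfolding tracked_def by (blast intro: word_at_shift_in_near_words)
  moreover have "real (Suc n) * c + real A \<le> real n * c + real (A + nat \<lceil>c\<rceil>)"
    using c by (simp add: algebra_simps)
  ultimately show "word_at (shift y) n \<in> near_words X n (real n * c + real (A + nat \<lceil>c\<rceil>))"
    using near_words_mono by blast
qed

lemma tracked_of_shift:
  assumes X: "X \<noteq> {}" and c: "0 \<le> c" and y: "shift y \<in> tracked X c A"
  shows "y \<in> tracked X c (Suc A)"
  unfolding tracked_def
proof (intro CollectI allI)
  fix n
  show "word_at y n \<in> near_words X n (real n * c + real (Suc A))"
  proof (cases n)
    case 0
    then show ?thesis using Nil_in_near_words[OF X] by (simp add: word_at_def)
  next
    case (Suc m)
    have "word_at y (Suc m) \<in> near_words X (Suc m) (real m * c + real A + 1)"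
      using y unfolding tracked_def by (blast intro: word_at_Suc_in_near_words)
    moreover have "real m * c + real A + 1 \<le> real (Suc m) * c + real (Suc A)"
      using c by (simp add: algebra_simps)
    ultimately show ?thesis using Suc near_words_mono by blast
  qed
qed

lemma shift_in_trackable_iff:
  assumes "X \<noteq> {}" and "0 \<le> c"
  shows "shift y \<in> trackable X c \<longleftrightarrow> y \<in> trackable X c"
proof
  assume "shift y \<in> trackable X c"
  then obtain A where "shift y \<in> tracked X c A" unfolding trackable_def by blast
  then show "y \<in> trackable X c" using tracked_of_shift[OF assms] unfolding trackable_def by blast
next
  assume "y \<in> trackable X c"
  then obtain A where "y \<in> tracked X c A" unfolding trackable_def by blast
  then show "shift y \<in> trackable X c" using shift_tracked[OF assms(2)] unfolding trackable_def by blast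
qed

lemma sets_tracked: "tracked (X :: (int \<Rightarrow> 'a::finite) set) c A \<in> sets seq_space"
proof -
  have "tracked X c A = (\<Inter>n. {y. word_at y n \<in> near_words X n (real n * c + real A)})"
    unfolding tracked_def by auto
  then show ?thesis by (auto intro: sets_word_at_mem)
qed

lemma sets_trackable: "trackable (X :: (int \<Rightarrow> 'a::finite) set) c \<in> sets seq_space"
  unfolding trackable_def using sets_tracked by auto

text \<open>\<open>trackable X c\<close> is shift-invariant, so by ergodicity it is either null or of full measure.\<close>

lemma measure_trackable_eq_1:
  fixes \<mu> :: "(int \<Rightarrow> 'a::finite) measure"
  assumes hmm: "hidden_markov_measure G P \<mu>" and erg: "ergodic \<mu>"
    and X: "X \<noteq> {}" and c: "0 \<le> c" and pos: "0 < measure \<mu> (trackable X c)"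
  shows "measure \<mu> (trackable X c) = 1"
proof -
  note \<mu> = hidden_markov_measureD[OF hmm]
  have "shift -` trackable X c \<inter> space \<mu> = trackable X c"
    using shift_in_trackable_iff[OF X c] \<mu>(1) by auto
  moreover have "trackable X c \<in> sets \<mu>" using sets_trackable \<mu>(2) by simp
  ultimately have "measure \<mu> (trackable X c) = 0 \<or> measure \<mu> (trackable X c) = 1"
    using erg unfolding ergodic_def by blast
  then show ?thesis using pos by auto
qed

lemma measure_tracked_ge:
  fixes \<mu> :: "(int \<Rightarrow> 'a::finite) measure"
  assumes hmm: "hidden_markov_measure G P \<mu>"
    and ge: "\<And>N. 0 < N \<Longrightarrow> b \<le> measure \<mu> {y. \<forall>n\<le>N. word_at y n \<in> near_words X n (real n * c + real A)}"
  shows "b \<le> measure \<mu> (tracked X c A)"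
proof -
  note \<mu> = hidden_markov_measureD[OF hmm]
  interpret prob_space \<mu> by (fact \<mu>(3))
  define U where "U N = {y. \<forall>n\<le>N. word_at y n \<in> near_words X n (real n * c + real A)}" for N
  have "(\<lambda>N. measure \<mu> (U N)) \<longlonglongrightarrow> measure \<mu> (\<Inter>N. U N)"
  proof (rule finite_Lim_measure_decseq)
    have "U N = (\<Inter>n\<in>{..N}. {y. word_at y n \<in> near_words X n (real n * c + real A)})" for N
      unfolding U_def by auto
    then show "range U \<subseteq> sets \<mu>"
      using sets_word_at_mem \<mu>(2) by (auto intro!: sets.finite_INT)
    show "decseq U" unfolding U_def by (intro decseq_SucI) auto
  qed
  moreover have "(\<Inter>N. U N) = tracked X c A"
    unfolding U_def tracked_def by blast
  moreover have "\<forall>N\<ge>1. b \<le> measure \<mu> (U N)" using ge unfolding U_def by simp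
  ultimately show ?thesis by (intro LIMSEQ_le_const) auto
qed

context graph_chain
begin

lemma marginal_mono:
  assumes hmm: "hidden_markov_measure G P \<mu>" and "\<And>w. w \<in> W \<Longrightarrow> length w = n \<Longrightarrow> w \<in> W'"
  shows "marginal \<mu> n W \<le> marginal \<mu> n W'"
  unfolding marginal_eq_sum_hmm_cyl[OF hmm] using assms(2) finite_words_length hmm_cyl_nonneg
  by (intro sum_mono2) auto

lemma marginal_balls_eq_1:
  assumes hmm: "hidden_markov_measure G P \<mu>" and n: "0 < n" and X: "X \<noteq> {}"
  shows "marginal \<mu> n (Bn (presented G) n \<inter> (\<Union>x\<in>Bn X n. hball n x)) = 1"
proof -
  interpret prob_space \<mu> using hidden_markov_measureD[OF hmm] by simp
  obtain z where "z \<in> X" using X by blast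
  then have x0: "word_at z n \<in> Bn X n" unfolding Bn_def word_at_def by (auto intro!: exI[of _ 0])
  have "w \<in> (\<Union>x\<in>Bn X n. hball n x)" if "length w = n" for w :: "'a list"
    using x0 that hamming_le_length[of "word_at z n" w] unfolding hball_def by (intro UN_I[OF x0]) auto
  then have "marginal \<mu> n (\<Union>x\<in>Bn X n. hball n x) = marginal \<mu> n UNIV"
    unfolding marginal_eq_sum_hmm_cyl[OF hmm] by (intro sum.cong) auto
  also have "\<dots> = 1" using hidden_markov_measureD(1)[OF hmm] prob_space unfolding marginal_def by simp
  finally show ?thesis using marginal_inter_Bn_presented[OF hmm n] by simp
qed

lemma Reps_le_if_tracked:
  assumes hmm: "hidden_markov_measure G P \<mu>" and n: "0 < n" and c: "0 \<le> c"
    and A: "1 - \<epsilon> \<le> measure \<mu> (tracked X c A)"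
  shows "real (Reps \<epsilon> (Bn X n) (Bn (presented G) n) (marginal \<mu> n)) \<le> real n * c + real A"
proof -
  note \<mu> = hidden_markov_measureD[OF hmm]
  interpret prob_space \<mu> by (fact \<mu>(3))
  define T where "T = real n * c + real A"
  define r where "r = nat \<lfloor>T\<rfloor>"
  have T: "0 \<le> T" unfolding T_def using c by simp
  have "measure \<mu> (tracked X c A) \<le> marginal \<mu> n (near_words X n T)"
    unfolding marginal_def \<mu>(1) T_def tracked_def
    using sets_word_at_mem \<mu>(2) by (intro finite_measure_mono) auto
  also have "\<dots> \<le> marginal \<mu> n (\<Union>x\<in>Bn X n. hball r x)"
  proof (rule marginal_mono[OF hmm])
    fix w assume "w \<in> near_words X n T" "length w = n"
    then obtain x where x: "x \<in> Bn X n" "real (hamming x w) \<le> T" "length w = n"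
      unfolding near_words_def by blast
    then have "w \<in> hball r x"
      unfolding hball_def r_def using length_Bn[OF x(1)] T by (auto simp: le_nat_floor)
    then show "w \<in> (\<Union>x\<in>Bn X n. hball r x)" using x(1) by blast
  qed
  also have "\<dots> = marginal \<mu> n (Bn (presented G) n \<inter> (\<Union>x\<in>Bn X n. hball r x))"
    by (rule marginal_inter_Bn_presented[OF hmm n, symmetric])
  finally have "Reps \<epsilon> (Bn X n) (Bn (presented G) n) (marginal \<mu> n) \<le> r"
    using A by (intro Reps_le) linarith
  then show ?thesis unfolding r_def T_def[symmetric] using T by linarith
qed

lemma R_eps_le_if_trackable:
  assumes hmm: "hidden_markov_measure G P \<mu>" and c: "0 \<le> c"
    and full: "measure \<mu> (trackable X c) = 1" and \<epsilon>: "0 < \<epsilon>"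
  shows "R_eps X (presented G) \<mu> \<epsilon> \<le> ereal c"
proof -
  note \<mu> = hidden_markov_measureD[OF hmm]
  interpret prob_space \<mu> by (fact \<mu>(3))
  have "(\<lambda>A. measure \<mu> (tracked X c A)) \<longlonglongrightarrow> measure \<mu> (\<Union>A. tracked X c A)"
    using sets_tracked \<mu>(2) by (intro finite_Lim_measure_incseq monoI tracked_mono) auto
  then have "(\<lambda>A. measure \<mu> (tracked X c A)) \<longlonglongrightarrow> 1" using full unfolding trackable_def by simp
  then have "\<forall>\<^sub>F A in sequentially. 1 - \<epsilon> < measure \<mu> (tracked X c A)"
    using \<epsilon> by (intro order_tendstoD(1)) auto
  then obtain A where "1 - \<epsilon> < measure \<mu> (tracked X c A)"
    by (auto simp: eventually_sequentially)
  then have A: "1 - \<epsilon> \<le> measure \<mu> (tracked X c A)" by simp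
  have "R_eps X (presented G) \<mu> \<epsilon> \<le> liminf (\<lambda>n. ereal (c + real A / real n))"
    unfolding R_eps_def
  proof (rule Liminf_mono)
    show "\<forall>\<^sub>F n in sequentially. ereal (real (Reps \<epsilon> (Bn X n) (Bn (presented G) n) (marginal \<mu> n)) / real n)
        \<le> ereal (c + real A / real n)"
      using eventually_gt_at_top[of "0::nat"]
    proof eventually_elim
      case (elim n)
      then have "real (Reps \<epsilon> (Bn X n) (Bn (presented G) n) (marginal \<mu> n)) / real n
          \<le> (real n * c + real A) / real n"
        using Reps_le_if_tracked[OF hmm elim c A] by (intro divide_right_mono) auto
      also have "\<dots> = c + real A / real n" using elim by (simp add: field_simps)
      finally show ?case by simp
    qed
  qed
  also have "liminf (\<lambda>n. ereal (c + real A / real n)) = ereal c"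
    using tendsto_add[OF tendsto_const lim_const_over_n, of c "real A"]
    by (intro lim_imp_Liminf) (auto intro: tendsto_ereal)
  finally show ?thesis .
qed

lemma R0_le_if_trackable:
  assumes hmm: "hidden_markov_measure G P \<mu>" and X: "X \<noteq> {}" and c0: "0 \<le> c0"
    and full: "\<And>c. c0 < c \<Longrightarrow> measure \<mu> (trackable X c) = 1"
  shows "R0 X (presented G) \<mu> \<le> ereal c0"
proof (rule R0_le)
  fix \<epsilon> \<epsilon>' :: real assume "0 < \<epsilon>" "\<epsilon> \<le> \<epsilon>'"
  show "R_eps X (presented G) \<mu> \<epsilon>' \<le> R_eps X (presented G) \<mu> \<epsilon>"
  proof (rule R_eps_antimono)
    fix n :: nat assume "0 < n"
    then show "Reps \<epsilon>' (Bn X n) (Bn (presented G) n) (marginal \<mu> n) \<le> Reps \<epsilon> (Bn X n) (Bn (presented G) n) (marginal \<mu> n)"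
      using marginal_balls_eq_1[OF hmm _ X] \<open>0 < \<epsilon>\<close> \<open>\<epsilon> \<le> \<epsilon>'\<close> by (intro Reps_antimono[where r = n]) auto
  qed
next
  fix \<epsilon> :: real assume \<epsilon>: "0 < \<epsilon>"
  show "R_eps X (presented G) \<mu> \<epsilon> \<le> ereal c0"
  proof (rule ereal_le_epsilon2)
    fix \<delta> :: real assume "0 < \<delta>"
    then show "R_eps X (presented G) \<mu> \<epsilon> \<le> ereal c0 + ereal \<delta>"
      using R_eps_le_if_trackable[OF hmm _ full \<epsilon>, of "c0 + \<delta>"] c0 by simp
  qed
qed

end

section \<open>Feasible couplings\<close>

locale feasible_coupling =
  Y: graph_chain GY PY for GY :: "('w, 'f, 'a::finite) lgraph" and PY +
  fixes GX :: "('v, 'e, 'a) lgraph" and P :: "'e \<times> 'f \<Rightarrow> real"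
  assumes wfX: "wf_lgraph GX" and feasible: "MB_feasible GX GY PY P"
begin

definition E :: "('e \<times> 'f) set" where
  "E = edges GX \<times> edges GY"

definition psrc :: "'e \<times> 'f \<Rightarrow> 'v \<times> 'w" where
  "psrc e = (src GX (fst e), src GY (snd e))"

definition ptgt :: "'e \<times> 'f \<Rightarrow> 'v \<times> 'w" where
  "ptgt e = (tgt GX (fst e), tgt GY (snd e))"

definition supp :: "('e \<times> 'f) set" where
  "supp = {e \<in> E. 0 < P e}"

definition vflow :: "'v \<times> 'w \<Rightarrow> real" where
  "vflow v = (\<Sum>e | e \<in> E \<and> psrc e = v. P e)"

definition coupling_kernel :: "'e \<times> 'f \<Rightarrow> 'e \<times> 'f \<Rightarrow> real" where
  "coupling_kernel e e' = (if ptgt e = psrc e' then P e' / vflow (psrc e') else 0)"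

definition mismatch :: "'e \<times> 'f \<Rightarrow> real" where
  "mismatch e = of_bool (lab GX (fst e) \<noteq> lab GY (snd e))"

lemma P_nonneg: "e \<in> E \<Longrightarrow> 0 \<le> P e"
  and P_sum: "(\<Sum>e\<in>E. P e) = 1"
  and P_marginal: "f \<in> edges GY \<Longrightarrow> (\<Sum>e | e \<in> E \<and> snd e = f. P e) = PY f"
  and P_circulation: "v \<in> verts GX \<times> verts GY \<Longrightarrow>
        (\<Sum>e | e \<in> E \<and> psrc e = v. P e) = (\<Sum>e | e \<in> E \<and> ptgt e = v. P e)"
  and P_conditional: "e \<in> E \<Longrightarrow>
        (\<Sum>e' | e' \<in> E \<and> snd e' = snd e \<and> src GX (fst e') = src GX (fst e). P e')
        = mc_Q GY PY (snd e) *
          (\<Sum>e' | e' \<in> E \<and> src GY (snd e') = src GY (snd e) \<and> src GX (fst e') = src GX (fst e). P e')"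
  using feasible unfolding MB_feasible_def Let_def E_def psrc_def ptgt_def by auto

lemma finite_E: "finite E"
  using wfX Y.finite_edges unfolding wf_lgraph_def E_def by auto

lemma psrc_ptgt_in_verts: "e \<in> E \<Longrightarrow> psrc e \<in> verts GX \<times> verts GY \<and> ptgt e \<in> verts GX \<times> verts GY"
  using wfX Y.src_tgt_in_verts unfolding wf_lgraph_def E_def psrc_def ptgt_def by auto

lemma sum_supp: "(\<Sum>e | e \<in> supp \<and> R e. P e * u e) = (\<Sum>e | e \<in> E \<and> R e. P e * u e)"
  using finite_E P_nonneg by (intro sum.mono_neutral_left) (auto simp: supp_def less_le)

lemma finite_supp: "finite supp"
  using finite_E unfolding supp_def by simp

lemma supp_succ: "e \<in> supp \<Longrightarrow> \<exists>e'\<in>supp. psrc e' = ptgt e"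
  using positive_circulation_succ[OF finite_E psrc_ptgt_in_verts P_nonneg P_circulation]
  unfolding supp_def by auto

lemma supp_pred: "e \<in> supp \<Longrightarrow> \<exists>e'\<in>supp. ptgt e' = psrc e"
  using positive_circulation_pred[OF finite_E psrc_ptgt_in_verts P_nonneg P_circulation]
  unfolding supp_def by auto

lemma vflow_pos:
  assumes e: "e \<in> supp"
  shows "0 < vflow (psrc e)" "0 < vflow (ptgt e)"
proof -
  have "P e \<le> vflow (psrc e)" "P e \<le> (\<Sum>e' | e' \<in> E \<and> ptgt e' = ptgt e. P e')"
    using e finite_E P_nonneg unfolding vflow_def supp_def by (auto intro!: member_le_sum)
  moreover have "(\<Sum>e' | e' \<in> E \<and> ptgt e' = ptgt e. P e') = vflow (ptgt e)"
    using P_circulation psrc_ptgt_in_verts e unfolding vflow_def supp_def by auto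
  ultimately show "0 < vflow (psrc e)" "0 < vflow (ptgt e)" using e unfolding supp_def by auto
qed

sublocale prod: stationary_chain supp coupling_kernel P
proof
  show "finite supp" by (rule finite_supp)
  show "0 \<le> coupling_kernel e e'" if "e' \<in> supp" for e e'
    using vflow_pos[OF that] that unfolding coupling_kernel_def supp_def by simp
  show "0 < P e" if "e \<in> supp" for e using that unfolding supp_def by simp
  show "(\<Sum>e\<in>supp. P e) = 1"
    using sum_supp[where R = "\<lambda>_. True" and u = "\<lambda>_. 1"] P_sum by simp
next
  fix e assume e: "e \<in> supp"
  have "(\<Sum>e'\<in>supp. coupling_kernel e e') = (\<Sum>e'\<in>supp. if psrc e' = ptgt e then P e' / vflow (ptgt e) else 0)"
    unfolding coupling_kernel_def by (intro sum.cong) auto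
  also have "\<dots> = (\<Sum>e' | e' \<in> supp \<and> psrc e' = ptgt e. P e' / vflow (ptgt e))"
    by (rule sum.inter_filter[OF finite_supp, symmetric])
  also have "\<dots> = (\<Sum>e' | e' \<in> supp \<and> psrc e' = ptgt e. P e') / vflow (ptgt e)"
    by (rule sum_divide_distrib[symmetric])
  also have "(\<Sum>e' | e' \<in> supp \<and> psrc e' = ptgt e. P e') = vflow (ptgt e)"
    using sum_supp[where u = "\<lambda>_. 1"] unfolding vflow_def by simp
  finally show "(\<Sum>e'\<in>supp. coupling_kernel e e') = 1" using vflow_pos(2)[OF e] by simp
next
  fix e' assume e': "e' \<in> supp"
  have "(\<Sum>e\<in>supp. P e * coupling_kernel e e')
      = (\<Sum>e\<in>supp. if ptgt e = psrc e' then P e * (P e' / vflow (psrc e')) else 0)"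
    unfolding coupling_kernel_def by (intro sum.cong) auto
  also have "\<dots> = (\<Sum>e | e \<in> supp \<and> ptgt e = psrc e'. P e * (P e' / vflow (psrc e')))"
    by (rule sum.inter_filter[OF finite_supp, symmetric])
  also have "\<dots> = (\<Sum>e | e \<in> supp \<and> ptgt e = psrc e'. P e) * (P e' / vflow (psrc e'))"
    by (rule sum_distrib_right[symmetric])
  also have "(\<Sum>e | e \<in> supp \<and> ptgt e = psrc e'. P e) = (\<Sum>e | e \<in> E \<and> ptgt e = psrc e'. P e)"
    using sum_supp[where u = "\<lambda>_. 1"] by simp
  also have "(\<Sum>e | e \<in> E \<and> ptgt e = psrc e'. P e) = vflow (psrc e')"
    using P_circulation psrc_ptgt_in_verts e' unfolding vflow_def supp_def by auto
  finally show "(\<Sum>e\<in>supp. P e * coupling_kernel e e') = P e'" using vflow_pos(1)[OF e'] by simp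
qed

text \<open>Constraint (5) of the linear program is exactly what makes the second component of the
  coupled chain a Markov chain with the transitions of \<open>GY\<close>.\<close>

lemma sum_coupling_kernel_snd:
  assumes e: "e \<in> supp" and f: "f \<in> edges GY"
  shows "(\<Sum>e' | e' \<in> supp \<and> snd e' = f. coupling_kernel e e') = Y.edge_kernel (snd e) f"
proof (cases "tgt GY (snd e) = src GY f")
  case True
  obtain e'' where e'': "e'' \<in> supp" "psrc e'' = ptgt e" using supp_succ[OF e] by blast
  have fE: "(fst e'', f) \<in> E" using e''(1) f unfolding supp_def E_def by auto
  have "(\<Sum>e' | e' \<in> supp \<and> snd e' = f. coupling_kernel e e')
      = (\<Sum>e' | e' \<in> supp \<and> snd e' = f \<and> src GX (fst e') = tgt GX (fst e). P e' * (1 / vflow (ptgt e)))"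
    using True unfolding coupling_kernel_def psrc_def ptgt_def
    by (intro sum.mono_neutral_cong_right finite_subset[OF _ finite_supp]) auto
  also have "\<dots> = (\<Sum>e' | e' \<in> E \<and> snd e' = snd (fst e'', f) \<and> src GX (fst e') = src GX (fst (fst e'', f)). P e')
      / vflow (ptgt e)"
    using e'' unfolding sum_supp psrc_def ptgt_def by (simp add: sum_divide_distrib)
  also have "\<dots> = mc_Q GY PY f * (\<Sum>e' | e' \<in> E \<and> src GY (snd e') = src GY (snd (fst e'', f))
      \<and> src GX (fst e') = src GX (fst (fst e'', f)). P e') / vflow (ptgt e)"
    unfolding P_conditional[OF fE] by simp
  also have "(\<Sum>e' | e' \<in> E \<and> src GY (snd e') = src GY (snd (fst e'', f))
      \<and> src GX (fst e') = src GX (fst (fst e'', f)). P e') = vflow (ptgt e)"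
    using e''(2) True unfolding vflow_def psrc_def ptgt_def by (intro sum.cong) auto
  finally show ?thesis using vflow_pos(2)[OF e] True unfolding Y.edge_kernel_def by simp
next
  case False
  then have "coupling_kernel e e' = 0" if "snd e' = f" for e'
    using that unfolding coupling_kernel_def psrc_def ptgt_def by auto
  then show ?thesis using False unfolding Y.edge_kernel_def by simp
qed

lemma path_step_map_snd:
  assumes p: "p \<in> prod.paths e0 n"
  shows "prod.path_step (\<lambda>q. F (map snd q)) p = Y.path_step F (map snd p)"
proof -
  have e: "last p \<in> supp" using p by (rule prod.last_paths)
  have "p \<noteq> []" using prod.length_paths[OF p] by auto
  have "prod.path_step (\<lambda>q. F (map snd q)) p
      = (\<Sum>e'\<in>supp. coupling_kernel (last p) e' * F (map snd p @ [snd e']))"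
    unfolding prod.path_step_def by simp
  also have "\<dots> = (\<Sum>f\<in>edges GY. \<Sum>e' | e' \<in> supp \<and> snd e' = f. coupling_kernel (last p) e' * F (map snd p @ [f]))"
    using finite_supp Y.finite_edges
    by (subst sum.group[symmetric, where g = snd]) (auto simp: supp_def E_def intro!: sum.cong)
  also have "\<dots> = (\<Sum>f\<in>edges GY. Y.edge_kernel (last (map snd p)) f * F (map snd p @ [f]))"
    using \<open>p \<noteq> []\<close> sum_coupling_kernel_snd[OF e]
    by (intro sum.cong refl) (simp add: last_map flip: sum_distrib_right)
  finally show ?thesis unfolding Y.path_step_def .
qed

lemma path_exp_map_snd:
  assumes e0: "e0 \<in> supp"
  shows "prod.path_exp e0 n (\<lambda>p. F (map snd p)) = Y.path_exp (snd e0) n F"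
proof (induction n arbitrary: F)
  case (Suc n)
  have "prod.path_exp e0 n (prod.path_step (\<lambda>p. F (map snd p)))
      = prod.path_exp e0 n (\<lambda>p. Y.path_step F (map snd p))"
    by (intro prod.path_exp_cong[OF e0] path_step_map_snd)
  then show ?case using Suc by simp
qed simp

lemma P_le_PY:
  assumes "e \<in> supp"
  shows "P e \<le> PY (snd e)"
proof -
  have e: "e \<in> E" "snd e \<in> edges GY" using assms unfolding supp_def E_def by auto
  have "P e \<le> (\<Sum>e' | e' \<in> E \<and> snd e' = snd e. P e')"
    using finite_E P_nonneg e(1) by (intro member_le_sum) auto
  then show ?thesis using P_marginal[OF e(2)] by simp
qed

lemma path_exp_map_snd_le:
  assumes e0: "e0 \<in> supp" and F: "\<And>q. 0 \<le> F q"
  shows "P e0 * prod.path_exp e0 n (\<lambda>p. F (map snd p)) \<le> (\<Sum>f\<in>edges GY. PY f * Y.path_exp f n F)"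
proof -
  have f0: "snd e0 \<in> edges GY" using e0 unfolding supp_def E_def by auto
  have nonneg: "0 \<le> Y.path_exp f n F" if "f \<in> edges GY" for f
    using that F by (rule Y.path_exp_nonneg)
  have "P e0 * prod.path_exp e0 n (\<lambda>p. F (map snd p)) \<le> PY (snd e0) * Y.path_exp (snd e0) n F"
    unfolding path_exp_map_snd[OF e0] using P_le_PY[OF e0] nonneg[OF f0] by (rule mult_right_mono)
  also have "\<dots> \<le> (\<Sum>f\<in>edges GY. PY f * Y.path_exp f n F)"
    using f0 Y.finite_edges Y.P_nonneg nonneg by (intro member_le_sum) auto
  finally show ?thesis .
qed

lemma fst_labels_in_Bn:
  assumes p: "p \<in> prod.paths e0 n"
  shows "map (lab GX \<circ> fst) p \<in> Bn (presented GX) (Suc n)"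
proof -
  have chain: "tgt GX (fst (p ! i)) = src GX (fst (p ! Suc i))" if "Suc i < length p" for i
  proof -
    have "0 < coupling_kernel (p ! i) (p ! Suc i)" using p that unfolding prod.paths_def by auto
    then show ?thesis unfolding coupling_kernel_def psrc_def ptgt_def by (auto split: if_splits)
  qed
  have succ: "\<exists>e'\<in>fst ` supp. src GX e' = tgt GX e" if "e \<in> fst ` supp" for e
    using that supp_succ unfolding psrc_def ptgt_def by fastforce
  have pred: "\<exists>e'\<in>fst ` supp. tgt GX e' = src GX e" if "e \<in> fst ` supp" for e
    using that supp_pred unfolding psrc_def ptgt_def by fastforce
  have "map (lab GX) (map fst p) \<in> Bn (presented GX) (length (map fst p))"
    using p chain unfolding prod.paths_def
    by (intro Bn_presented_of_finite_path[OF _ succ pred]) (auto simp: supp_def E_def)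
  then show ?thesis using prod.length_paths[OF p] by simp
qed

lemma presented_GX_nonempty: "presented GX \<noteq> {}"
proof -
  have "supp \<noteq> {}" using prod.m_sum by auto
  then obtain e0 where "e0 \<in> supp" by blast
  then have "map (lab GX \<circ> fst) [e0] \<in> Bn (presented GX) 1"
    using fst_labels_in_Bn[OF prod.singleton_paths] by simp
  then show ?thesis unfolding Bn_def by auto
qed

lemma hamming_labels_eq_path_cost:
  "real (hamming (map (lab GX \<circ> fst) p) (map (lab GY \<circ> snd) p)) = prod.path_cost mismatch p"
proof -
  have "{i. i < length (map (lab GX \<circ> fst) p) \<and> map (lab GX \<circ> fst) p ! i \<noteq> map (lab GY \<circ> snd) p ! i}
      = {..<length p} \<inter> {i. lab GX (fst (p ! i)) \<noteq> lab GY (snd (p ! i))}"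
    by auto
  then show ?thesis unfolding hamming_def prod.path_cost_def mismatch_def by simp
qed

lemma mean_mismatch: "prod.mean mismatch = (\<Sum>e | e \<in> E \<and> lab GX (fst e) \<noteq> lab GY (snd e). P e)"
proof -
  have "prod.mean mismatch = (\<Sum>e | e \<in> supp \<and> True. P e * mismatch e)"
    unfolding prod.mean_def by simp
  also have "\<dots> = (\<Sum>e\<in>E. P e * mismatch e)" unfolding sum_supp by simp
  also have "\<dots> = (\<Sum>e\<in>E. if lab GX (fst e) \<noteq> lab GY (snd e) then P e else 0)"
    unfolding mismatch_def by (intro sum.cong) auto
  also have "\<dots> = (\<Sum>e | e \<in> E \<and> lab GX (fst e) \<noteq> lab GY (snd e). P e)"
    by (rule sum.inter_filter[OF finite_E, symmetric])
  finally show ?thesis .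
qed

lemma snd_labels_near_words:
  assumes p: "p \<in> prod.paths e0 N"
    and costs: "\<forall>j\<le>N. prod.path_cost mismatch (take (Suc j) p) \<le> real (Suc j) * c + real A"
    and n: "n \<le> Suc N"
  shows "take n (map (lab GY \<circ> snd) p) \<in> near_words (presented GX) n (real n * c + real A)"
proof (cases n)
  case 0
  then show ?thesis using Nil_in_near_words[OF presented_GX_nonempty] by simp
next
  case (Suc j)
  then have j: "j \<le> N" using n by simp
  define q where "q = take (Suc j) p"
  have q: "q \<in> prod.paths e0 j" unfolding q_def using p j by (rule prod.take_paths)
  have "real (hamming (map (lab GX \<circ> fst) q) (map (lab GY \<circ> snd) q)) \<le> real n * c + real A"
    unfolding hamming_labels_eq_path_cost q_def using costs j Suc by simp
  then show ?thesis
    using fst_labels_in_Bn[OF q] unfolding near_words_def Suc q_def by (auto simp: take_map)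
qed

lemma measure_prefixes_near_ge:
  assumes hmm: "hidden_markov_measure GY PY \<mu>" and e0: "e0 \<in> supp"
    and bound: "b \<le> prod.path_exp e0 N
      (\<lambda>p. of_bool (\<forall>j\<le>N. prod.path_cost mismatch (take (Suc j) p) \<le> real (Suc j) * c + real A))"
  shows "P e0 * b \<le> measure \<mu> {y. \<forall>n\<le>Suc N. word_at y n \<in> near_words (presented GX) n (real n * c + real A)}"
proof -
  note \<mu> = hidden_markov_measureD[OF hmm]
  define OK where "OK = {w. \<forall>n\<le>Suc N. take n w \<in> near_words (presented GX) n (real n * c + real A)}"
  have "b \<le> prod.path_exp e0 N (\<lambda>p. of_bool (map (lab GY) (map snd p) \<in> OK))"
  proof (rule order_trans[OF bound prod.path_exp_mono[OF e0]])
    fix p assume "p \<in> prod.paths e0 N"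
    then show "of_bool (\<forall>j\<le>N. prod.path_cost mismatch (take (Suc j) p) \<le> real (Suc j) * c + real A)
        \<le> (of_bool (map (lab GY) (map snd p) \<in> OK) :: real)"
      using snd_labels_near_words unfolding OK_def by auto
  qed
  then have "P e0 * b \<le> P e0 * prod.path_exp e0 N (\<lambda>p. of_bool (map (lab GY) (map snd p) \<in> OK))"
    using e0 by (intro mult_left_mono) (simp_all add: supp_def)
  also have "\<dots> \<le> (\<Sum>f\<in>edges GY. PY f * Y.path_exp f N (\<lambda>q. of_bool (map (lab GY) q \<in> OK)))"
    using e0 by (rule path_exp_map_snd_le) simp
  also have "\<dots> = measure \<mu> {y. word_at y (Suc N) \<in> OK}"
    unfolding Y.sum_hmm_cyl_eq_path_exp[symmetric] marginal_eq_sum_hmm_cyl[OF hmm, symmetric]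
    unfolding marginal_def \<mu>(1) by simp
  also have "{y. word_at y (Suc N) \<in> OK}
      = {y. \<forall>n\<le>Suc N. word_at y n \<in> near_words (presented GX) n (real n * c + real A)}"
    unfolding OK_def by (auto simp: take_word_at simp del: word_at_Suc)
  finally show ?thesis .
qed

lemma measure_trackable_pos:
  assumes hmm: "hidden_markov_measure GY PY \<mu>" and s: "0 < s"
  shows "0 < measure \<mu> (trackable (presented GX) (prod.mean mismatch + s))"
proof -
  note \<mu> = hidden_markov_measureD[OF hmm]
  interpret prob_space \<mu> by (fact \<mu>(3))
  obtain e0 where e0: "e0 \<in> supp" and "\<forall>s>0. \<exists>C A0. \<forall>A\<ge>A0. \<forall>N. 1 - C / real A \<le> prod.path_exp e0 N
      (\<lambda>p. of_bool (\<forall>j\<le>N. prod.path_cost mismatch (take (Suc j) p) \<le> real (Suc j) * (prod.mean mismatch + s) + real A))"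
    using prod.ex_state_prefix_costs_bounded[of mismatch] by (auto simp: mismatch_def)
  then obtain C A0 where CA: "\<And>A N. A0 \<le> A \<Longrightarrow> 1 - C / real A \<le> prod.path_exp e0 N
      (\<lambda>p. of_bool (\<forall>j\<le>N. prod.path_cost mismatch (take (Suc j) p) \<le> real (Suc j) * (prod.mean mismatch + s) + real A))"
    using s by blast
  have "P e0 * (1 - C / real A) \<le> measure \<mu> (trackable (presented GX) (prod.mean mismatch + s))"
    if "A0 \<le> A" for A
  proof -
    have "P e0 * (1 - C / real A) \<le> measure \<mu> (tracked (presented GX) (prod.mean mismatch + s) A)"
    proof (rule measure_tracked_ge[OF hmm])
      fix N :: nat assume "0 < N"
      then obtain N' where "N = Suc N'" using gr0_implies_Suc by blast
      then show "P e0 * (1 - C / real A) \<le> measure \<mu> {y. \<forall>n\<le>N. word_at y n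
          \<in> near_words (presented GX) n (real n * (prod.mean mismatch + s) + real A)}"
        using measure_prefixes_near_ge[OF hmm e0 CA[OF that]] by simp
    qed
    also have "\<dots> \<le> measure \<mu> (trackable (presented GX) (prod.mean mismatch + s))"
      using sets_trackable \<mu>(2) by (intro finite_measure_mono) (auto simp: trackable_def)
    finally show ?thesis .
  qed
  moreover have "(\<lambda>A. P e0 * (1 - C / real A)) \<longlonglongrightarrow> P e0 * (1 - 0)"
    by (intro tendsto_intros lim_const_over_n)
  ultimately have "P e0 \<le> measure \<mu> (trackable (presented GX) (prod.mean mismatch + s))"
    using LIMSEQ_le_const2[of _ "P e0"] by fastforce
  then show ?thesis using e0 unfolding supp_def by simp
qed

lemma R0_le_mean_mismatch:
  assumes hmm: "hidden_markov_measure GY PY \<mu>" and erg: "ergodic \<mu>"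
  shows "R0 (presented GX) (presented GY) \<mu> \<le> ereal (prod.mean mismatch)"
proof (rule Y.R0_le_if_trackable[OF hmm presented_GX_nonempty])
  show "0 \<le> prod.mean mismatch" by (intro prod.mean_nonneg) (simp add: mismatch_def)
  fix c assume "prod.mean mismatch < c"
  then show "measure \<mu> (trackable (presented GX) c) = 1"
    using measure_trackable_pos[OF hmm, of "c - prod.mean mismatch"] \<open>0 \<le> prod.mean mismatch\<close>
    by (intro measure_trackable_eq_1[OF hmm erg presented_GX_nonempty]) auto
qed

end

theorem theorem28:
  fixes GX :: "('v, 'e, 'a::finite) lgraph"
    and GY :: "('w, 'f, 'a) lgraph"
    and PY :: "'f \<Rightarrow> real"
    and \<mu> :: "(int \<Rightarrow> 'a) measure"
  assumes "wf_lgraph GX" and "wf_lgraph GY"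
    and "stationary_mc GY PY"
    and "hidden_markov_measure GY PY \<mu>"
    and "ergodic \<mu>"
  shows "R0 (presented GX) (presented GY) \<mu> \<le> MB GX GY PY"
  unfolding MB_def
proof (rule Inf_greatest, clarify)
  fix P assume "MB_feasible GX GY PY P"
  then interpret feasible_coupling GY PY GX P
    using assms by unfold_locales
  show "R0 (presented GX) (presented GY) \<mu> \<le> ereal (\<Sum>e | e \<in> edges GX \<times> edges GY \<and> lab GX (fst e) \<noteq> lab GY (snd e). P e)"
    using R0_le_mean_mismatch[OF assms(4,5)] unfolding mean_mismatch E_def .
qed

end
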